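(* Consider any quantum secret sharing (QSS) scheme on $n$ parties whose access structure $\Gamma$ (the collection of authorized sets) is non-empty. Let $t_{\min}$ be the minimum integer $t$ such that every set of $t$ or more parties is authorized, and let $z_{\max}$ be the maximum integer $z$ such that every set of $z$ or fewer parties is unauthorized. Then $n\leq t_{\min}+z_{\max}$. If the QSS scheme is a pure state QSS scheme, then $n=t_{\min}+z_{\max}$.
   Context: A QSS scheme on $n$ parties is an encoding of a quantum secret into a joint state of $n$ subsystems (shares), the $j$-th share being given to party $j\in[n]=\{1,\dots,n\}$. A set $P\subseteq[n]$ of parties is authorized if the secret can be recovered from the shares of the parties in $P$, and unauthorized if the shares of the parties in $P$ contain no information about the secret. The access structure $\Gamma$ is the collection of authorized sets and the adversary structure the collection of unauthorized sets; these are disjoint, and a set may be neither (intermediate). A QSS scheme is a pure state QSS scheme if every pure state secret is encoded into a pure state of the $n$ shares. *)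

theory Defs
  imports Complex_Main
begin

text \<open>An operator on a system with computational basis indexed by a finite set A
  is a function rho :: 'a => 'a => complex (only its values on A x A matter).
  Parties are 0,...,n-1; share j has dimension dims j; the joint basis of the
  shares of a set S of parties is the set of functions x with x j < dims j for
  j in S and x j = 0 otherwise (tensor product of the share spaces).\<close>

definition basis :: "(nat \<Rightarrow> nat) \<Rightarrow> nat set \<Rightarrow> (nat \<Rightarrow> nat) set" where
  "basis dims S = {x. \<forall>j. (j \<in> S \<longrightarrow> x j < dims j) \<and> (j \<notin> S \<longrightarrow> x j = 0)}"

definition merge :: "nat set \<Rightarrow> (nat \<Rightarrow> nat) \<Rightarrow> (nat \<Rightarrow> nat) \<Rightarrow> (nat \<Rightarrow> nat)" where
  "merge P x z = (\<lambda>j. if j \<in> P then x j else z j)"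

definition ptrace :: "nat \<Rightarrow> (nat \<Rightarrow> nat) \<Rightarrow> nat set
      \<Rightarrow> ((nat \<Rightarrow> nat) \<Rightarrow> (nat \<Rightarrow> nat) \<Rightarrow> complex) \<Rightarrow> ((nat \<Rightarrow> nat) \<Rightarrow> (nat \<Rightarrow> nat) \<Rightarrow> complex)" where
  "ptrace n dims P rho = (\<lambda>x y. \<Sum>z\<in>basis dims ({..<n} - P). rho (merge P x z) (merge P y z))"

definition density :: "'a set \<Rightarrow> ('a \<Rightarrow> 'a \<Rightarrow> complex) \<Rightarrow> bool" where
  "density A rho \<longleftrightarrow>
     (\<forall>i\<in>A. \<forall>j\<in>A. rho j i = cnj (rho i j)) \<and>
     (\<forall>v. 0 \<le> Re (\<Sum>i\<in>A. \<Sum>j\<in>A. cnj (v i) * rho i j * v j)) \<and>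
     (\<Sum>i\<in>A. rho i i) = 1"

definition pure_state :: "'a set \<Rightarrow> ('a \<Rightarrow> 'a \<Rightarrow> complex) \<Rightarrow> bool" where
  "pure_state A rho \<longleftrightarrow> (\<exists>psi. (\<Sum>i\<in>A. (cmod (psi i))\<^sup>2) = 1 \<and>
       (\<forall>i\<in>A. \<forall>j\<in>A. rho i j = psi i * cnj (psi j)))"

definition is_channel :: "'a set \<Rightarrow> 'b set
      \<Rightarrow> (('a \<Rightarrow> 'a \<Rightarrow> complex) \<Rightarrow> ('b \<Rightarrow> 'b \<Rightarrow> complex)) \<Rightarrow> bool" where
  "is_channel A B Phi \<longleftrightarrow> (\<exists>(m::nat) (K :: nat \<Rightarrow> 'b \<Rightarrow> 'a \<Rightarrow> complex).
      (\<forall>i\<in>A. \<forall>j\<in>A. (\<Sum>k<m. \<Sum>x\<in>B. cnj (K k x i) * K k x j) = (if i = j then 1 else 0)) \<and>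
      (\<forall>rho. Phi rho = (\<lambda>x y. \<Sum>k<m. \<Sum>i\<in>A. \<Sum>j\<in>A. K k x i * rho i j * cnj (K k y j))))"

definition qss_scheme :: "nat \<Rightarrow> nat \<Rightarrow> (nat \<Rightarrow> nat)
      \<Rightarrow> ((nat \<Rightarrow> nat \<Rightarrow> complex) \<Rightarrow> ((nat \<Rightarrow> nat) \<Rightarrow> (nat \<Rightarrow> nat) \<Rightarrow> complex)) \<Rightarrow> bool" where
  "qss_scheme d n dims E \<longleftrightarrow> 2 \<le> d \<and> (\<forall>j<n. 1 \<le> dims j) \<and> is_channel {..<d} (basis dims {..<n}) E"

definition authorized where
  "authorized d n dims E P \<longleftrightarrow> P \<subseteq> {..<n} \<and>
     (\<exists>R. is_channel (basis dims P) {..<d} R \<and>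
        (\<forall>rho. density {..<d} rho \<longrightarrow>
           (\<forall>i<d. \<forall>j<d. R (ptrace n dims P (E rho)) i j = rho i j)))"

definition unauthorized where
  "unauthorized d n dims E P \<longleftrightarrow> P \<subseteq> {..<n} \<and>
     (\<forall>rho sigma. density {..<d} rho \<longrightarrow> density {..<d} sigma \<longrightarrow>
        (\<forall>x\<in>basis dims P. \<forall>y\<in>basis dims P.
           ptrace n dims P (E rho) x y = ptrace n dims P (E sigma) x y))"

definition access_structure where
  "access_structure d n dims E = {P. authorized d n dims E P}"

definition pure_qss where
  "pure_qss d n dims E \<longleftrightarrow> (\<forall>rho. pure_state {..<d} rho \<longrightarrow> pure_state (basis dims {..<n}) (E rho))"

definition t_min where
  "t_min d n dims E = (LEAST t::nat. \<forall>P\<subseteq>{..<n}. t \<le> card P \<longrightarrow> authorized d n dims E P)"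

definition z_max where
  "z_max d n dims E = (GREATEST z::nat. \<forall>P\<subseteq>{..<n}. card P \<le> z \<longrightarrow> unauthorized d n dims E P)"

end

theory Submission
  imports Defs "HOL-Library.FuncSet"
begin

(*
  If P is authorized, its recovery channel composed with the encoding is the identity on pure states,
  which forces each Kraus operator of the composite to be a scalar; then the reduced state of the
  complement of P does not depend on the secret (no-cloning). So every set of at most n - t_min
  parties is unauthorized, i.e. n - t_min <= z_max.

  In a pure scheme with an authorized set, all Kraus operators of the encoding are proportional,
  so the encoding is an isometry V. If Q is unauthorized, the amplitudes of V, split along Q and its
  complement P, satisfy the Knill-Laflamme conditions, and an explicit recovery channel on P
  (Gram-Schmidt on the code space, completed by the projector onto its orthogonal complement) shows
  that P is authorized. So every set of at least n - z_max parties is authorized, i.e. t_min <= n - z_max.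
*)

section \<open>Shares of a set of parties\<close>

lemma finite_basis:
  assumes "finite S"
  shows "finite (basis dims S)"
proof -
  let ?ext = "\<lambda>f j. if j \<in> S then f j else 0"
  have "basis dims S \<subseteq> ?ext ` PiE S (\<lambda>j. {..<dims j})"
  proof
    fix x assume x: "x \<in> basis dims S"
    then have "x = ?ext (restrict x S)" and "restrict x S \<in> PiE S (\<lambda>j. {..<dims j})"
      by (auto simp: basis_def)
    then show "x \<in> ?ext ` PiE S (\<lambda>j. {..<dims j})" by blast
  qed
  then show ?thesis
    using assms by (meson finite_PiE finite_imageI finite_lessThan finite_subset)
qed

lemma finite_basis_subset: "P \<subseteq> {..<n} \<Longrightarrow> finite (basis dims P)"
  by (meson finite_basis finite_lessThan finite_subset)

lemma merge_in_basis:
  "x \<in> basis dims P \<Longrightarrow> z \<in> basis dims Q \<Longrightarrow> merge P x z \<in> basis dims (P \<union> Q)"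
  by (auto simp: basis_def merge_def)

lemma merge_in_basis_lessThan:
  "P \<subseteq> {..<n} \<Longrightarrow> x \<in> basis dims P \<Longrightarrow> z \<in> basis dims ({..<n} - P) \<Longrightarrow> merge P x z \<in> basis dims {..<n}"
  using merge_in_basis[of x dims P z "{..<n} - P"] by (simp add: Un_absorb1)

lemma merge_commute:
  "x \<in> basis dims P \<Longrightarrow> z \<in> basis dims Q \<Longrightarrow> P \<inter> Q = {} \<Longrightarrow> merge Q z x = merge P x z"
  by (auto simp: basis_def merge_def fun_eq_iff)

lemma bij_betw_merge:
  assumes "P \<inter> Q = {}"
  shows "bij_betw (\<lambda>(x, z). merge P x z) (basis dims P \<times> basis dims Q) (basis dims (P \<union> Q))"
proof (rule bij_betw_byWitness[where f' = "\<lambda>X. (merge P X (\<lambda>_. 0), merge P (\<lambda>_. 0) X)"])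
  show "\<forall>a\<in>basis dims P \<times> basis dims Q.
      (\<lambda>X. (merge P X (\<lambda>_. 0), merge P (\<lambda>_. 0) X)) ((\<lambda>(x, z). merge P x z) a) = a"
    using assms by (fastforce simp: basis_def merge_def fun_eq_iff)
  show "\<forall>X\<in>basis dims (P \<union> Q). (\<lambda>(x, z). merge P x z) (merge P X (\<lambda>_. 0), merge P (\<lambda>_. 0) X) = X"
    by (auto simp: merge_def)
  show "(\<lambda>(x, z). merge P x z) ` (basis dims P \<times> basis dims Q) \<subseteq> basis dims (P \<union> Q)"
    using merge_in_basis by fast
  show "(\<lambda>X. (merge P X (\<lambda>_. 0), merge P (\<lambda>_. 0) X)) ` basis dims (P \<union> Q) \<subseteq> basis dims P \<times> basis dims Q"
    using assms by (auto simp: basis_def merge_def)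
qed

lemma sum_basis_Un:
  assumes "P \<inter> Q = {}"
  shows "(\<Sum>X\<in>basis dims (P \<union> Q). f X) = (\<Sum>x\<in>basis dims P. \<Sum>z\<in>basis dims Q. f (merge P x z))"
  using sum.reindex_bij_betw[OF bij_betw_merge[OF assms], of f]
  by (simp add: sum.cartesian_product split_def)

lemma sum_basis_split:
  assumes "P \<subseteq> {..<n}"
  shows "(\<Sum>X\<in>basis dims {..<n}. f X) = (\<Sum>x\<in>basis dims P. \<Sum>z\<in>basis dims ({..<n} - P). f (merge P x z))"
  using sum_basis_Un[of P "{..<n} - P", where dims = dims and f = f] assms by (simp add: Un_absorb1)

lemma ptrace_Diff:
  assumes "P \<subseteq> {..<n}" "z \<in> basis dims ({..<n} - P)" "z' \<in> basis dims ({..<n} - P)"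
  shows "ptrace n dims ({..<n} - P) F z z' = (\<Sum>x\<in>basis dims P. F (merge P x z) (merge P x z'))"
  unfolding ptrace_def double_diff[OF assms(1) subset_refl]
  using merge_commute[OF _ assms(2)] merge_commute[OF _ assms(3)] by (intro sum.cong) auto

section \<open>Vectors on finite index sets\<close>

lemma sum_mult_cnj_eq_0D:
  fixes f :: "'a \<Rightarrow> complex"
  assumes "finite S" "(\<Sum>s\<in>S. f s * cnj (f s)) = 0" "s \<in> S"
  shows "f s = 0"
proof -
  have "complex_of_real (\<Sum>s\<in>S. (cmod (f s))\<^sup>2) = 0"
    using assms(2) by (simp only: of_real_sum complex_norm_square)
  then have "(\<Sum>s\<in>S. (cmod (f s))\<^sup>2) = 0"
    by (simp only: of_real_eq_0_iff)
  then show ?thesis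
    using sum_nonneg_eq_0_iff[OF assms(1), of "\<lambda>s. (cmod (f s))\<^sup>2"] assms(3) by simp
qed

lemma sum_lessThan_add: "(\<Sum>l<r + (N::nat). f l) = (\<Sum>l<r. f l) + (\<Sum>t<N. f (r + t))"
  by (induction N) (simp_all add: add.assoc)

definition cinner :: "'a set \<Rightarrow> ('a \<Rightarrow> complex) \<Rightarrow> ('a \<Rightarrow> complex) \<Rightarrow> complex" where
  "cinner B f g = (\<Sum>x\<in>B. cnj (f x) * g x)"

lemma cinner_commute: "cinner B g f = cnj (cinner B f g)"
  by (simp add: cinner_def mult.commute)

lemma cinner_sum_right:
  "finite S \<Longrightarrow> cinner B f (\<lambda>x. \<Sum>s\<in>S. c s * g s x) = (\<Sum>s\<in>S. c s * cinner B f (g s))"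
  unfolding cinner_def by (simp add: sum_distrib_left mult_ac sum.swap[of _ B S])

lemma cinner_add_right: "cinner B f (\<lambda>x. g x + h x) = cinner B f g + cinner B f h"
  unfolding cinner_def by (simp add: ring_distribs sum.distrib)

lemma cinner_diff_right: "cinner B f (\<lambda>x. g x - h x) = cinner B f g - cinner B f h"
  unfolding cinner_def by (simp add: ring_distribs sum_subtractf)

lemma cinner_diff_left: "cinner B (\<lambda>x. f x - g x) h = cinner B f h - cinner B g h"
  unfolding cinner_def by (simp add: ring_distribs sum_subtractf)

lemma cinner_scale_right: "cinner B f (\<lambda>x. c * g x) = c * cinner B f g"
  unfolding cinner_def by (simp add: sum_distrib_left mult_ac)

lemma cinner_scale_left: "cinner B (\<lambda>x. c * f x) g = cnj c * cinner B f g"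
  unfolding cinner_def by (simp add: sum_distrib_left mult_ac)

lemma cinner_cong:
  "(\<And>x. x \<in> B \<Longrightarrow> f x = f' x) \<Longrightarrow> (\<And>x. x \<in> B \<Longrightarrow> g x = g' x) \<Longrightarrow> cinner B f g = cinner B f' g'"
  unfolding cinner_def by (rule sum.cong) auto

lemma cinner_self: "cinner B f f = complex_of_real (\<Sum>x\<in>B. (cmod (f x))\<^sup>2)"
  unfolding cinner_def of_real_sum complex_norm_square by (simp add: mult.commute)

lemma cinner_self_eq_0D: "finite B \<Longrightarrow> cinner B f f = 0 \<Longrightarrow> x \<in> B \<Longrightarrow> f x = 0"
  using sum_mult_cnj_eq_0D[of B f] by (simp add: cinner_def mult.commute)

lemma unit_multiple:
  assumes "finite B" "x0 \<in> B" "w x0 \<noteq> 0"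
  obtains c where "c \<noteq> 0" "cinner B (\<lambda>x. c * w x) (\<lambda>x. c * w x) = 1"
proof -
  define N where "N = (\<Sum>x\<in>B. (cmod (w x))\<^sup>2)"
  have "cinner B w w \<noteq> 0"
    using cinner_self_eq_0D[OF assms(1) _ assms(2)] assms(3) by blast
  then have "N > 0"
    unfolding N_def cinner_self by (metis of_real_0 order_less_le sum_nonneg zero_le_power2)
  define c where "c = complex_of_real (1 / sqrt N)"
  have "cinner B (\<lambda>x. c * w x) (\<lambda>x. c * w x) = cnj c * c * cinner B w w"
    unfolding cinner_scale_left cinner_scale_right by (simp only: mult.assoc)
  also have "\<dots> = 1"
    using \<open>N > 0\<close> by (simp add: c_def cinner_self flip: N_def of_real_mult)
  finally show ?thesis
    using \<open>N > 0\<close> by (intro that[of c]) (auto simp: c_def)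
qed

definition orthonormal_family :: "'a set \<Rightarrow> nat \<Rightarrow> (nat \<Rightarrow> 'a \<Rightarrow> complex) \<Rightarrow> bool" where
  "orthonormal_family B r f \<longleftrightarrow> (\<forall>s<r. \<forall>t<r. cinner B (f s) (f t) = (if s = t then 1 else 0))"

lemma orthonormal_family_Suc:
  assumes "orthonormal_family B r f" "\<And>s. s < r \<Longrightarrow> cinner B (f s) g = 0" "cinner B g g = 1"
  shows "orthonormal_family B (Suc r) (f(r := g))"
  unfolding orthonormal_family_def
proof (intro allI impI)
  fix s t assume "s < Suc r" "t < Suc r"
  moreover have "cinner B g (f s) = 0" if "s < r" for s
    using assms(2)[OF that] by (simp add: cinner_commute[of B g])
  ultimately show "cinner B ((f(r := g)) s) ((f(r := g)) t) = (if s = t then 1 else 0)"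
    using assms(1,2,3) by (auto simp: orthonormal_family_def less_Suc_eq)
qed

lemma cinner_residual:
  assumes "orthonormal_family B r f" "s < r"
  shows "cinner B (f s) (\<lambda>x. u x - (\<Sum>t<r. cinner B (f t) u * f t x)) = 0"
proof -
  have "(\<Sum>t<r. cinner B (f t) u * cinner B (f s) (f t)) = (\<Sum>t<r. if t = s then cinner B (f s) u else 0)"
    using assms by (intro sum.cong) (auto simp: orthonormal_family_def)
  then show ?thesis
    using assms(2) by (simp add: cinner_diff_right cinner_sum_right)
qed

lemma orthonormal_expansion_Suc:
  assumes "orthonormal_family B (Suc r) f"
    and "\<And>x. x \<in> B \<Longrightarrow> u x = (\<Sum>s<r. cinner B (f s) u * f s x) + \<beta> * f r x"
  shows "x \<in> B \<Longrightarrow> u x = (\<Sum>s<Suc r. cinner B (f s) u * f s x)"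
proof -
  have "cinner B (f r) u = cinner B (f r) (\<lambda>x. (\<Sum>s<r. cinner B (f s) u * f s x) + \<beta> * f r x)"
    using assms(2) by (rule cinner_cong[OF refl])
  also have "\<dots> = \<beta>"
    using assms(1) by (simp add: orthonormal_family_def cinner_add_right cinner_sum_right cinner_scale_right)
  finally show "x \<in> B \<Longrightarrow> u x = (\<Sum>s<Suc r. cinner B (f s) u * f s x)"
    using assms(2) by simp
qed

definition lincomb :: "'z set \<Rightarrow> ('z \<Rightarrow> complex) \<Rightarrow> ('z \<Rightarrow> 'a \<Rightarrow> complex) \<Rightarrow> 'a \<Rightarrow> complex" where
  "lincomb Z \<alpha> u x = (\<Sum>z\<in>Z. \<alpha> z * u z x)"

lemma lincomb_insert_fun_upd_0:
  "finite Z \<Longrightarrow> z0 \<notin> Z \<Longrightarrow> lincomb (insert z0 Z) (\<alpha>(z0 := 0)) u = lincomb Z \<alpha> u"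
  unfolding lincomb_def by (auto intro!: sum.cong)

lemma lincomb_residual:
  assumes "finite Z" "z0 \<in> Z"
  shows "lincomb Z (\<lambda>z. c * ((if z = z0 then 1 else 0) - (\<Sum>s<r. a s * \<alpha> s z))) u x
    = c * (u z0 x - (\<Sum>s<r. a s * lincomb Z (\<alpha> s) u x))"
  using assms unfolding lincomb_def
  by (simp add: ring_distribs sum_subtractf sum_distrib_left sum_distrib_right mult_ac
      sum.swap[of _ Z "{..<r}"] if_distrib[where f = "\<lambda>a. _ * a"] cong: if_cong)

lemma gram_schmidt:
  fixes u :: "'z \<Rightarrow> 'a \<Rightarrow> complex"
  assumes "finite B" "finite Z"
  shows "\<exists>r cs. orthonormal_family B r (\<lambda>s. lincomb Z (cs s) u) \<and>
    (\<forall>z\<in>Z. \<forall>x\<in>B. u z x = (\<Sum>s<r. cinner B (lincomb Z (cs s) u) (u z) * lincomb Z (cs s) u x))"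
  using assms(2)
proof (induction Z rule: finite_induct)
  case empty
  show ?case by (auto simp: orthonormal_family_def)
next
  case (insert z0 Z)
  then obtain r cs where ortho: "orthonormal_family B r (\<lambda>s. lincomb Z (cs s) u)"
    and span: "\<forall>z\<in>Z. \<forall>x\<in>B. u z x = (\<Sum>s<r. cinner B (lincomb Z (cs s) u) (u z) * lincomb Z (cs s) u x)"
    by blast
  define cs0 where "cs0 s = (cs s)(z0 := 0)" for s
  define f where "f s = lincomb (insert z0 Z) (cs0 s) u" for s
  have "f = (\<lambda>s. lincomb Z (cs s) u)"
    using insert by (simp add: fun_eq_iff f_def cs0_def lincomb_insert_fun_upd_0)
  with ortho span have ortho: "orthonormal_family B r f"
    and span: "\<forall>z\<in>Z. \<forall>x\<in>B. u z x = (\<Sum>s<r. cinner B (f s) (u z) * f s x)"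
    by simp_all
  define a where "a s = cinner B (f s) (u z0)" for s
  define w where "w x = u z0 x - (\<Sum>s<r. a s * f s x)" for x
  show ?case
  proof (cases "\<forall>x\<in>B. w x = 0")
    case True
    then show ?thesis
      using ortho span by (intro exI[of _ r] exI[of _ cs0]) (auto simp: f_def[symmetric] w_def a_def)
  next
    case False
    then obtain c where "c \<noteq> 0" and norm: "cinner B (\<lambda>x. c * w x) (\<lambda>x. c * w x) = 1"
      using unit_multiple[OF assms(1)] by blast
    define cs' where "cs' = cs0(r := \<lambda>z. c * ((if z = z0 then 1 else 0) - (\<Sum>s<r. a s * cs0 s z)))"
    have f': "lincomb (insert z0 Z) (cs' s) u = (f(r := \<lambda>x. c * w x)) s" for s
    proof -
      have "lincomb (insert z0 Z) (cs' r) u x = c * w x" for x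
        using insert.hyps by (simp add: cs'_def lincomb_residual w_def f_def)
      then show ?thesis
        by (auto simp: fun_eq_iff f_def cs'_def)
    qed
    have ortho': "orthonormal_family B (Suc r) (f(r := \<lambda>x. c * w x))"
      using ortho cinner_residual[OF ortho] norm
      by (intro orthonormal_family_Suc) (auto simp: w_def a_def cinner_scale_right)
    have "u z x = (\<Sum>s<Suc r. cinner B ((f(r := \<lambda>x. c * w x)) s) (u z) * (f(r := \<lambda>x. c * w x)) s x)"
      if "z \<in> insert z0 Z" "x \<in> B" for z x
    proof (rule orthonormal_expansion_Suc[OF ortho' _ \<open>x \<in> B\<close>])
      show "u z y = (\<Sum>s<r. cinner B ((f(r := \<lambda>x. c * w x)) s) (u z) * (f(r := \<lambda>x. c * w x)) s y)
          + (if z = z0 then 1 / c else 0) * (f(r := \<lambda>x. c * w x)) r y" if "y \<in> B" for y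
        using span \<open>z \<in> insert z0 Z\<close> \<open>c \<noteq> 0\<close> that by (auto simp: w_def a_def)
    qed
    then show ?thesis
      using ortho' by (intro exI[of _ "Suc r"] exI[of _ cs']) (simp only: f', blast)
  qed
qed

definition ket :: "'a \<Rightarrow> 'a \<Rightarrow> complex" where
  "ket i = (\<lambda>a. if a = i then 1 else 0)"

lemma cnj_ket [simp]: "cnj (ket i a) = ket i a"
  by (simp add: ket_def)

lemma sum_mult_ket: "finite A \<Longrightarrow> i \<in> A \<Longrightarrow> (\<Sum>a\<in>A. f a * ket i a) = f i"
  by (simp add: ket_def if_distrib[where f = "\<lambda>a. _ * a"] cong: if_cong)

lemma norm_ket: "finite A \<Longrightarrow> i \<in> A \<Longrightarrow> (\<Sum>a\<in>A. (cmod (ket i a))\<^sup>2) = 1"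
  by (simp add: ket_def if_distrib[where f = "\<lambda>a. (cmod a)\<^sup>2"] cong: if_cong)

lemma sum_two_kets:
  assumes "finite A" "i \<in> A" "j \<in> A"
  shows "(\<Sum>a\<in>A. (x * ket i a + y * ket j a) * g a) = x * g i + y * g j"
proof -
  have "(\<Sum>a\<in>A. (x * ket i a + y * ket j a) * g a) = x * (\<Sum>a\<in>A. g a * ket i a) + y * (\<Sum>a\<in>A. g a * ket j a)"
    by (simp add: ring_distribs sum.distrib sum_distrib_left mult_ac)
  then show ?thesis
    using assms by (simp add: sum_mult_ket)
qed

lemma form_two_kets:
  assumes "finite A" "i \<in> A" "j \<in> A"
  shows "(\<Sum>a\<in>A. \<Sum>b\<in>A. (x * ket i a + y * ket j a) * cnj (x * ket i b + y * ket j b) * D a b)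
     = x * cnj x * D i i + x * cnj y * D i j + y * cnj x * D j i + y * cnj y * D j j"
proof -
  have "(\<Sum>a\<in>A. \<Sum>b\<in>A. (x * ket i a + y * ket j a) * cnj (x * ket i b + y * ket j b) * D a b)
      = (\<Sum>a\<in>A. (x * ket i a + y * ket j a) * (\<Sum>b\<in>A. cnj (x * ket i b + y * ket j b) * D a b))"
    by (simp add: sum_distrib_left mult.assoc)
  also have "\<dots> = (\<Sum>a\<in>A. (x * ket i a + y * ket j a) * (cnj x * D a i + cnj y * D a j))"
    using sum_two_kets[OF assms, of "cnj x" "cnj y"] by simp
  also have "\<dots> = x * (cnj x * D i i + cnj y * D i j) + y * (cnj x * D j i + cnj y * D j j)"
    by (rule sum_two_kets[OF assms])
  finally show ?thesis
    by (simp add: ring_distribs mult_ac)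
qed

lemma norm_two_kets:
  assumes "finite A" "i \<in> A" "j \<in> A" "i \<noteq> j"
  shows "(\<Sum>a\<in>A. (cmod (x * ket i a + y * ket j a))\<^sup>2) = (cmod x)\<^sup>2 + (cmod y)\<^sup>2"
proof -
  have "(cmod (x * ket i a + y * ket j a))\<^sup>2 = (if a = i then (cmod x)\<^sup>2 else 0) + (if a = j then (cmod y)\<^sup>2 else 0)" for a
    using assms(4) by (simp add: ket_def)
  then show ?thesis
    using assms by (simp add: sum.distrib)
qed

lemma sesquilinear_form_eq_0:
  fixes D :: "nat \<Rightarrow> nat \<Rightarrow> complex"
  assumes D: "\<And>\<psi>. (\<Sum>a<d. (cmod (\<psi> a))\<^sup>2) = 1 \<Longrightarrow> (\<Sum>a<d. \<Sum>b<d. \<psi> a * cnj (\<psi> b) * D a b) = 0"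
    and "i < d" "j < d"
  shows "D i j = 0"
proof -
  have diag: "D k k = 0" if "k < d" for k
    using D[of "ket k"] norm_ket[of "{..<d}" k] form_two_kets[of "{..<d}" k k 1 0 D] that by simp
  show ?thesis
  proof (cases "i = j")
    case False
    define r where "r = complex_of_real (1 / sqrt 2)"
    have r: "r * cnj r = 1 / 2" "(cmod r)\<^sup>2 = 1 / 2"
      by (simp_all add: r_def norm_divide power_divide flip: of_real_mult)
    have "(\<Sum>a<d. (cmod (r * ket i a + y * ket j a))\<^sup>2) = 1" if "y = r \<or> y = \<i> * r" for y
      using norm_two_kets[of "{..<d}" i j r y] \<open>i \<noteq> j\<close> assms(2,3) r that by (auto simp: norm_mult)
    note norm = this
    have ij: "finite {..<d}" "i \<in> {..<d}" "j \<in> {..<d}"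
      using assms(2,3) by auto
    have "r * cnj r * D i i + r * cnj y * D i j + y * cnj r * D j i + y * cnj y * D j j = 0"
      if "y = r \<or> y = \<i> * r" for y
      using D[OF norm[OF that]] unfolding form_two_kets[OF ij] .
    from this[of r] this[of "\<i> * r"] have "D i j + D j i = 0" "D j i - D i j = 0"
      using diag assms(2,3) r(1) by (simp_all add: algebra_simps)
    then show ?thesis
      by (simp add: algebra_simps)
  qed (use diag assms in simp)
qed

lemma sum_sum_delta:
  fixes f :: "nat \<Rightarrow> nat \<Rightarrow> complex"
  assumes "a < d" "b < d"
  shows "(\<Sum>i<d. \<Sum>j<d. f i j * ((if a = i then x else 0) * cnj (if b = j then y else 0))) = f a b * (x * cnj y)"
proof -
  have "(\<Sum>j<d. f i j * ((if a = i then x else 0) * cnj (if b = j then y else 0)))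
      = (if i = a then f a b * (x * cnj y) else 0)" for i
    using assms(2) by (auto simp: if_distrib[of cnj] if_distrib[where f = "\<lambda>v. _ * v"] cong: if_cong)
  then show ?thesis
    using assms(1) by simp
qed

lemma sum_delta_pair:
  fixes f :: "nat \<Rightarrow> nat \<Rightarrow> complex"
  assumes "s < r" "a < d"
  shows "(\<Sum>t<r. \<Sum>b<d. f t b * (if a = b \<and> s = t then 1 else 0)) = f s a"
proof -
  have "(\<Sum>b<d. f t b * (if a = b \<and> s = t then 1 else 0)) = (if t = s then f s a else 0)" for t
    using assms(2) by (auto simp: if_distrib[where f = "\<lambda>v. _ * v"] cong: if_cong)
  then show ?thesis
    using assms(1) by simp
qed

lemma sum_form_ket_ket:
  fixes d :: nat
  assumes "a < d" "b < d"
  shows "(\<Sum>i<d. \<Sum>j<d. \<psi> i * cnj (\<psi> j) * (ket a i * ket b j)) = \<psi> a * cnj (\<psi> b)"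
proof -
  have "(\<Sum>i<d. \<Sum>j<d. \<psi> i * cnj (\<psi> j) * (ket a i * ket b j))
      = (\<Sum>i<d. (\<Sum>j<d. (\<psi> i * ket a i * cnj (\<psi> j)) * ket b j))"
    by (simp add: mult_ac)
  also have "\<dots> = (\<Sum>i<d. \<psi> i * ket a i * cnj (\<psi> b))"
    using assms(2) by (simp only: sum_mult_ket finite_lessThan lessThan_iff)
  also have "\<dots> = (\<Sum>i<d. (\<psi> i * cnj (\<psi> b)) * ket a i)"
    by (simp add: mult_ac)
  also have "\<dots> = \<psi> a * cnj (\<psi> b)"
    using assms(1) by (simp only: sum_mult_ket finite_lessThan lessThan_iff)
  finally show ?thesis .
qed

lemma sum_outer_eq_outer_parallel:
  fixes u :: "nat \<Rightarrow> 'a \<Rightarrow> complex"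
  assumes "finite B" and \<phi>: "cinner B \<phi> \<phi> = 1"
    and outer: "\<And>X Y. X \<in> B \<Longrightarrow> Y \<in> B \<Longrightarrow> (\<Sum>k<m. u k X * cnj (u k Y)) = \<phi> X * cnj (\<phi> Y)"
    and "k < m" "X \<in> B"
  shows "u k X = cinner B \<phi> (u k) * \<phi> X"
proof -
  have outer_v: "(\<Sum>k<m. cinner B v (u k) * cnj (cinner B v (u k))) = cinner B v \<phi> * cnj (cinner B v \<phi>)" for v
  proof -
    have "cinner B v (u k) * cnj (cinner B v (u k)) = (\<Sum>X\<in>B. \<Sum>Y\<in>B. cnj (v X) * v Y * (u k X * cnj (u k Y)))"
      for k
      unfolding cinner_def cnj_sum sum_product by (simp add: mult_ac)
    then have "(\<Sum>k<m. cinner B v (u k) * cnj (cinner B v (u k)))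
        = (\<Sum>X\<in>B. \<Sum>Y\<in>B. cnj (v X) * v Y * (\<Sum>k<m. u k X * cnj (u k Y)))"
      by (simp only: sum_distrib_left sum.swap[of _ "{..<m}" B])
    also have "\<dots> = (\<Sum>X\<in>B. \<Sum>Y\<in>B. cnj (v X) * v Y * (\<phi> X * cnj (\<phi> Y)))"
      using outer by simp
    also have "\<dots> = cinner B v \<phi> * cnj (cinner B v \<phi>)"
      unfolding cinner_def cnj_sum sum_product by (simp add: mult_ac)
    finally show ?thesis .
  qed
  define v where "v X = u k X - cinner B \<phi> (u k) * \<phi> X" for X
  have v_\<phi>: "cinner B v \<phi> = 0"
    using \<phi> by (simp add: v_def[abs_def] cinner_diff_left cinner_scale_left cinner_commute[of B "u k"])
  then have "cinner B v (u k) = 0"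
    using outer_v[of v] sum_mult_cnj_eq_0D[of "{..<m}" "\<lambda>k. cinner B v (u k)" k] \<open>k < m\<close> by simp
  then have "cinner B v v = 0"
    using v_\<phi> by (simp add: v_def[abs_def] cinner_diff_right cinner_scale_right)
  then have "v X = 0"
    using cinner_self_eq_0D[OF assms(1) _ \<open>X \<in> B\<close>] by blast
  then show ?thesis
    by (simp add: v_def)
qed

section \<open>Kraus maps\<close>

definition kraus_map :: "nat \<Rightarrow> (nat \<Rightarrow> 'b \<Rightarrow> 'a \<Rightarrow> complex) \<Rightarrow> 'a set
    \<Rightarrow> ('a \<Rightarrow> 'a \<Rightarrow> complex) \<Rightarrow> 'b \<Rightarrow> 'b \<Rightarrow> complex" where
  "kraus_map m K A \<rho> = (\<lambda>x y. \<Sum>k<m. \<Sum>i\<in>A. \<Sum>j\<in>A. K k x i * \<rho> i j * cnj (K k y j))"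

definition kraus_complete :: "'a set \<Rightarrow> 'b set \<Rightarrow> nat \<Rightarrow> (nat \<Rightarrow> 'b \<Rightarrow> 'a \<Rightarrow> complex) \<Rightarrow> bool" where
  "kraus_complete A B m K \<longleftrightarrow>
     (\<forall>i\<in>A. \<forall>j\<in>A. (\<Sum>k<m. \<Sum>x\<in>B. cnj (K k x i) * K k x j) = (if i = j then 1 else 0))"

lemma is_channel_iff_kraus:
  "is_channel A B \<Phi> \<longleftrightarrow> (\<exists>m K. kraus_complete A B m K \<and> \<Phi> = kraus_map m K A)"
  unfolding is_channel_def kraus_complete_def kraus_map_def by (auto simp: fun_eq_iff)

lemma kraus_map_cong:
  "(\<And>i j. i \<in> A \<Longrightarrow> j \<in> A \<Longrightarrow> \<rho> i j = \<sigma> i j) \<Longrightarrow> kraus_map m K A \<rho> = kraus_map m K A \<sigma>"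
  unfolding kraus_map_def by (intro ext sum.cong refl) auto

definition proj :: "('a \<Rightarrow> complex) \<Rightarrow> 'a \<Rightarrow> 'a \<Rightarrow> complex" where
  "proj \<psi> = (\<lambda>i j. \<psi> i * cnj (\<psi> j))"

lemma kraus_map_proj:
  "kraus_map m K A (proj \<psi>) x y = (\<Sum>k<m. (\<Sum>i\<in>A. K k x i * \<psi> i) * cnj (\<Sum>j\<in>A. K k y j * \<psi> j))"
  unfolding kraus_map_def proj_def by (simp add: sum_product mult_ac)

lemma kraus_map_sum_outer:
  assumes "finite C"
  shows "kraus_map m K A (\<lambda>i j. \<Sum>c\<in>C. u c i * cnj (u c j)) x y
     = (\<Sum>c\<in>C. kraus_map m K A (proj (u c)) x y)"
  unfolding kraus_map_def proj_def
  by (simp add: sum_distrib_left sum_distrib_right sum.swap[of _ C] mult_ac)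

lemma density_proj:
  assumes "finite A" "(\<Sum>i\<in>A. (cmod (\<psi> i))\<^sup>2) = 1"
  shows "density A (proj \<psi>)"
  unfolding density_def
proof (intro conjI ballI allI)
  fix v :: "'a \<Rightarrow> complex"
  have "(\<Sum>i\<in>A. \<Sum>j\<in>A. cnj (v i) * proj \<psi> i j * v j) = cinner A v \<psi> * cnj (cinner A v \<psi>)"
    by (simp add: proj_def cinner_def sum_product mult_ac)
  then show "0 \<le> Re (\<Sum>i\<in>A. \<Sum>j\<in>A. cnj (v i) * proj \<psi> i j * v j)"
    by (simp only: complex_norm_square[symmetric] Re_complex_of_real) simp
  show "(\<Sum>i\<in>A. proj \<psi> i i) = 1"
    using assms(2) by (simp only: proj_def complex_norm_square[symmetric] of_real_sum[symmetric]) simp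
qed (simp add: proj_def)

lemma density_ket: "finite A \<Longrightarrow> i \<in> A \<Longrightarrow> density A (proj (ket i))"
  by (intro density_proj norm_ket)

lemma kraus_complete_sum_inner:
  assumes "finite B" "kraus_complete B D mL L"
  shows "(\<Sum>l<mL. \<Sum>a\<in>D. (\<Sum>x\<in>B. L l a x * g x) * cnj (\<Sum>x\<in>B. L l a x * h x)) = (\<Sum>x\<in>B. g x * cnj (h x))"
proof -
  have "(\<Sum>l<mL. \<Sum>a\<in>D. (\<Sum>x\<in>B. L l a x * g x) * cnj (\<Sum>x\<in>B. L l a x * h x))
      = (\<Sum>l<mL. \<Sum>a\<in>D. \<Sum>x\<in>B. \<Sum>x'\<in>B. g x * cnj (h x') * (cnj (L l a x') * L l a x))"
    by (simp add: sum_product mult_ac)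
  also have "\<dots> = (\<Sum>x\<in>B. \<Sum>x'\<in>B. g x * cnj (h x') * (\<Sum>l<mL. \<Sum>a\<in>D. cnj (L l a x') * L l a x))"
    by (simp only: sum_distrib_left sum.swap[of _ "{..<mL}" B] sum.swap[of _ D B])
  also have "\<dots> = (\<Sum>x\<in>B. \<Sum>x'\<in>B. g x * cnj (h x') * (if x' = x then 1 else 0))"
    using assms(2) unfolding kraus_complete_def by (intro sum.cong refl) simp
  also have "\<dots> = (\<Sum>x\<in>B. g x * cnj (h x))"
    using assms(1) by (simp add: if_distrib[where f = "\<lambda>a. _ * a"] cong: if_cong)
  finally show ?thesis .
qed

lemma identity_on_pure_states_entries:
  fixes M :: "'s \<Rightarrow> nat \<Rightarrow> nat \<Rightarrow> complex"
  assumes id: "\<And>\<psi> a b. (\<Sum>i<d. (cmod (\<psi> i))\<^sup>2) = 1 \<Longrightarrow> a < d \<Longrightarrow> b < d \<Longrightarrow>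
        (\<Sum>\<alpha>\<in>S. (\<Sum>i<d. M \<alpha> a i * \<psi> i) * cnj (\<Sum>j<d. M \<alpha> b j * \<psi> j)) = \<psi> a * cnj (\<psi> b)"
    and "a < d" "b < d" "i < d" "j < d"
  shows "(\<Sum>\<alpha>\<in>S. M \<alpha> a i * cnj (M \<alpha> b j)) = ket a i * ket b j"
proof -
  have "(\<lambda>i j. (\<Sum>\<alpha>\<in>S. M \<alpha> a i * cnj (M \<alpha> b j)) - ket a i * ket b j) i j = 0"
  proof (rule sesquilinear_form_eq_0[OF _ assms(4,5)])
    fix \<psi> :: "nat \<Rightarrow> complex" assume "(\<Sum>i<d. (cmod (\<psi> i))\<^sup>2) = 1"
    have "(\<Sum>i<d. \<Sum>j<d. \<psi> i * cnj (\<psi> j) * (\<Sum>\<alpha>\<in>S. M \<alpha> a i * cnj (M \<alpha> b j)))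
        = (\<Sum>i<d. \<Sum>\<alpha>\<in>S. \<Sum>j<d. \<psi> i * cnj (\<psi> j) * (M \<alpha> a i * cnj (M \<alpha> b j)))"
      unfolding sum_distrib_left by (intro sum.cong refl) (rule sum.swap)
    also have "\<dots> = (\<Sum>\<alpha>\<in>S. \<Sum>i<d. \<Sum>j<d. \<psi> i * cnj (\<psi> j) * (M \<alpha> a i * cnj (M \<alpha> b j)))"
      by (rule sum.swap)
    also have "\<dots> = (\<Sum>\<alpha>\<in>S. (\<Sum>i<d. M \<alpha> a i * \<psi> i) * cnj (\<Sum>j<d. M \<alpha> b j * \<psi> j))"
      by (simp add: sum_product mult_ac)
    also have "\<dots> = \<psi> a * cnj (\<psi> b)"
      using id \<open>(\<Sum>i<d. (cmod (\<psi> i))\<^sup>2) = 1\<close> assms(2,3) by blast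
    finally show "(\<Sum>i<d. \<Sum>j<d. \<psi> i * cnj (\<psi> j) *
        (\<lambda>i j. (\<Sum>\<alpha>\<in>S. M \<alpha> a i * cnj (M \<alpha> b j)) - ket a i * ket b j) i j) = 0"
      using sum_form_ket_ket[OF assms(2,3), of \<psi>] by (simp add: right_diff_distrib sum_subtractf)
  qed
  then show ?thesis
    by simp
qed

lemma identity_on_pure_states_scalar:
  fixes M :: "'s \<Rightarrow> nat \<Rightarrow> nat \<Rightarrow> complex"
  assumes "finite S" "0 < d"
    and id: "\<And>\<psi> a b. (\<Sum>i<d. (cmod (\<psi> i))\<^sup>2) = 1 \<Longrightarrow> a < d \<Longrightarrow> b < d \<Longrightarrow>
        (\<Sum>\<alpha>\<in>S. (\<Sum>i<d. M \<alpha> a i * \<psi> i) * cnj (\<Sum>j<d. M \<alpha> b j * \<psi> j)) = \<psi> a * cnj (\<psi> b)"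
  shows "\<And>\<alpha> a i. \<alpha> \<in> S \<Longrightarrow> a < d \<Longrightarrow> i < d \<Longrightarrow> M \<alpha> a i = (if a = i then M \<alpha> 0 0 else 0)"
    and "(\<Sum>\<alpha>\<in>S. M \<alpha> 0 0 * cnj (M \<alpha> 0 0)) = 1"
proof -
  note E = identity_on_pure_states_entries[where M = M, OF id]
  have off: "M \<alpha> a i = 0" if "\<alpha> \<in> S" "a < d" "i < d" "a \<noteq> i" for \<alpha> a i
    using sum_mult_cnj_eq_0D[OF assms(1) _ that(1), of "\<lambda>\<alpha>. M \<alpha> a i"] E[of a a i i] that
    by (simp add: ket_def)
  have diag: "(\<Sum>\<alpha>\<in>S. M \<alpha> i i * cnj (M \<alpha> j j)) = 1" if "i < d" "j < d" for i j
    using E[of i j i j] that by (simp add: ket_def)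
  have same_diag: "M \<alpha> i i = M \<alpha> 0 0" if "\<alpha> \<in> S" "i < d" for \<alpha> i
  proof -
    have "(x - y) * cnj (x - y) = x * cnj x - x * cnj y - y * cnj x + y * cnj y" for x y :: complex
      by (simp add: algebra_simps)
    then have "(\<Sum>\<alpha>\<in>S. (M \<alpha> i i - M \<alpha> 0 0) * cnj (M \<alpha> i i - M \<alpha> 0 0))
        = (\<Sum>\<alpha>\<in>S. M \<alpha> i i * cnj (M \<alpha> i i)) - (\<Sum>\<alpha>\<in>S. M \<alpha> i i * cnj (M \<alpha> 0 0))
          - (\<Sum>\<alpha>\<in>S. M \<alpha> 0 0 * cnj (M \<alpha> i i)) + (\<Sum>\<alpha>\<in>S. M \<alpha> 0 0 * cnj (M \<alpha> 0 0))"
      by (simp only: sum.distrib sum_subtractf)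
    also have "\<dots> = 0"
      using diag[of i i] diag[of i 0] diag[of 0 i] diag[of 0 0] that(2) assms(2) by simp
    finally show ?thesis
      using sum_mult_cnj_eq_0D[OF assms(1) _ that(1), of "\<lambda>\<alpha>. M \<alpha> i i - M \<alpha> 0 0"] by simp
  qed
  show "M \<alpha> a i = (if a = i then M \<alpha> 0 0 else 0)" if "\<alpha> \<in> S" "a < d" "i < d" for \<alpha> a i
    using off[OF that] same_diag[OF that(1,3)] by (cases "a = i") simp_all
  show "(\<Sum>\<alpha>\<in>S. M \<alpha> 0 0 * cnj (M \<alpha> 0 0)) = 1"
    using diag[of 0 0] assms(2) by simp
qed

lemma kraus_factor:
  assumes KV: "\<forall>k<m. \<forall>X\<in>B. \<forall>i\<in>A. K k X i = e k * V X i"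
    and e: "(\<Sum>k<m. e k * cnj (e k)) = 1"
  shows "kraus_complete A B m K \<longleftrightarrow> kraus_complete A B 1 (\<lambda>_. V)"
    and "X \<in> B \<Longrightarrow> Y \<in> B \<Longrightarrow> kraus_map m K A \<rho> X Y = kraus_map 1 (\<lambda>_. V) A \<rho> X Y"
proof -
  have "(\<Sum>k<m. \<Sum>X\<in>B. cnj (K k X i) * K k X j) = (\<Sum>X\<in>B. cnj (V X i) * V X j)" if "i \<in> A" "j \<in> A" for i j
  proof -
    have "(\<Sum>k<m. \<Sum>X\<in>B. cnj (K k X i) * K k X j) = (\<Sum>k<m. e k * cnj (e k)) * (\<Sum>X\<in>B. cnj (V X i) * V X j)"
      unfolding sum_product using KV that by (intro sum.cong refl) (simp add: mult_ac)
    then show ?thesis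
      using e by simp
  qed
  then show "kraus_complete A B m K \<longleftrightarrow> kraus_complete A B 1 (\<lambda>_. V)"
    unfolding kraus_complete_def by simp
  assume "X \<in> B" "Y \<in> B"
  have "kraus_map m K A \<rho> X Y = (\<Sum>k<m. \<Sum>i\<in>A. \<Sum>j\<in>A. e k * cnj (e k) * (V X i * \<rho> i j * cnj (V Y j)))"
    unfolding kraus_map_def using KV \<open>X \<in> B\<close> \<open>Y \<in> B\<close> by (intro sum.cong refl) (simp add: mult_ac)
  also have "\<dots> = (\<Sum>k<m. e k * cnj (e k)) * (\<Sum>i\<in>A. \<Sum>j\<in>A. V X i * \<rho> i j * cnj (V Y j))"
    by (subst sum_distrib_right) (simp only: sum_distrib_left)
  finally show "kraus_map m K A \<rho> X Y = kraus_map 1 (\<lambda>_. V) A \<rho> X Y"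
    using e by (simp add: kraus_map_def)
qed

lemma kraus_complete_proportional:
  assumes complete: "kraus_complete A B m K" and "k0 < m" "\<gamma> k0 \<noteq> 0"
    and proportional: "\<And>k X i. k < m \<Longrightarrow> X \<in> B \<Longrightarrow> i \<in> A \<Longrightarrow> K k X i * \<gamma> k0 = \<gamma> k * K k0 X i"
  obtains V where "kraus_complete A B 1 (\<lambda>_. V)"
    and "\<And>\<rho> X Y. X \<in> B \<Longrightarrow> Y \<in> B \<Longrightarrow> kraus_map m K A \<rho> X Y = kraus_map 1 (\<lambda>_. V) A \<rho> X Y"
proof -
  define g where "g = (\<Sum>k<m. (cmod (\<gamma> k))\<^sup>2)"
  have "(cmod (\<gamma> k0))\<^sup>2 \<le> g"
    unfolding g_def using \<open>k0 < m\<close> by (intro member_le_sum) auto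
  with \<open>\<gamma> k0 \<noteq> 0\<close> have "g > 0"
    by (smt (verit) zero_less_norm_iff zero_less_power)
  define s where "s = complex_of_real (sqrt g)"
  have "s \<noteq> 0" "s * cnj s = complex_of_real g"
    using \<open>g > 0\<close> by (simp_all add: s_def flip: of_real_mult)
  define V where "V X i = K k0 X i * (s / \<gamma> k0)" for X i
  define e where "e k = \<gamma> k / s" for k
  have KV: "\<forall>k<m. \<forall>X\<in>B. \<forall>i\<in>A. K k X i = e k * V X i"
  proof (intro allI impI ballI)
    fix k X i assume "k < m" "X \<in> B" "i \<in> A"
    then show "K k X i = e k * V X i"
      using proportional[of k X i] \<open>\<gamma> k0 \<noteq> 0\<close> \<open>s \<noteq> 0\<close> by (simp add: e_def V_def field_simps)
  qed
  have "(\<Sum>k<m. e k * cnj (e k)) = (\<Sum>k<m. \<gamma> k * cnj (\<gamma> k)) / (s * cnj s)"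
    by (simp add: e_def sum_divide_distrib)
  also have "(\<Sum>k<m. \<gamma> k * cnj (\<gamma> k)) = complex_of_real g"
    unfolding g_def of_real_sum complex_norm_square ..
  finally have "(\<Sum>k<m. e k * cnj (e k)) = 1"
    using \<open>s * cnj s = complex_of_real g\<close> \<open>g > 0\<close> by simp
  note factor = kraus_factor[OF KV this]
  show thesis
  proof (rule that)
    show "kraus_complete A B 1 (\<lambda>_. V)"
      using complete factor(1) by simp
    show "kraus_map m K A \<rho> X Y = kraus_map 1 (\<lambda>_. V) A \<rho> X Y" if "X \<in> B" "Y \<in> B" for \<rho> X Y
      using factor(2)[OF that] .
  qed
qed

lemma kraus_map_scalar_recovers:
  fixes W :: "'s \<Rightarrow> nat \<Rightarrow> 'x \<Rightarrow> complex"
  assumes "finite B"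
    and scalar: "\<And>l \<alpha> a i. l < mL \<Longrightarrow> \<alpha> \<in> S \<Longrightarrow> a < d \<Longrightarrow> i < d \<Longrightarrow>
        (\<Sum>x\<in>B. L l a x * W \<alpha> i x) = (if a = i then c l \<alpha> else 0)"
    and norm: "(\<Sum>l<mL. \<Sum>\<alpha>\<in>S. c l \<alpha> * cnj (c l \<alpha>)) = 1"
    and "a < d" "b < d"
  shows "kraus_map mL L B (\<lambda>x y. \<Sum>\<alpha>\<in>S. \<Sum>i<d. \<Sum>j<d. W \<alpha> i x * \<rho> i j * cnj (W \<alpha> j y)) a b = \<rho> a b"
proof -
  have "kraus_map mL L B (\<lambda>x y. \<Sum>\<alpha>\<in>S. \<Sum>i<d. \<Sum>j<d. W \<alpha> i x * \<rho> i j * cnj (W \<alpha> j y)) a b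
      = (\<Sum>l<mL. \<Sum>\<alpha>\<in>S. \<Sum>i<d. \<Sum>j<d. \<rho> i j * ((\<Sum>x\<in>B. L l a x * W \<alpha> i x) * cnj (\<Sum>y\<in>B. L l b y * W \<alpha> j y)))"
    unfolding kraus_map_def cnj_sum sum_product
    by (simp only: sum_distrib_left sum_distrib_right sum.swap[of _ B S] sum.swap[of _ B "{..<d}"]) (simp add: mult_ac)
  also have "\<dots> = (\<Sum>l<mL. \<Sum>\<alpha>\<in>S. \<Sum>i<d. \<Sum>j<d. \<rho> i j * ((if a = i then c l \<alpha> else 0) * cnj (if b = j then c l \<alpha> else 0)))"
    using scalar assms(4,5) by simp
  also have "\<dots> = (\<Sum>l<mL. \<Sum>\<alpha>\<in>S. \<rho> a b * (c l \<alpha> * cnj (c l \<alpha>)))"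
    using assms(4,5) by (simp add: sum_sum_delta)
  also have "\<dots> = \<rho> a b"
    using norm by (simp add: sum_distrib_left[symmetric])
  finally show ?thesis .
qed

lemma projector_complement_rows:
  fixes Pr :: "'x \<Rightarrow> 'x \<Rightarrow> complex"
  assumes "finite B"
    and herm: "\<And>x y. cnj (Pr x y) = Pr y x"
    and idem: "\<And>x y. (\<Sum>w\<in>B. Pr x w * Pr w y) = Pr x y"
  obtains N :: nat and F :: "nat \<Rightarrow> 'x \<Rightarrow> complex"
  where "\<And>x y. x \<in> B \<Longrightarrow> y \<in> B \<Longrightarrow> (\<Sum>t<N. cnj (F t x) * F t y) = (if x = y then 1 else 0) - Pr x y"
    and "\<And>t v. t < N \<Longrightarrow> (\<And>w. w \<in> B \<Longrightarrow> (\<Sum>x\<in>B. Pr w x * v x) = v w) \<Longrightarrow> (\<Sum>x\<in>B. F t x * v x) = 0"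
proof -
  obtain en where en: "bij_betw en {..<card B} B"
    using ex_bij_betw_nat_finite[OF assms(1)] by (auto simp: atLeast0LessThan)
  define F where "F t x = (if x = en t then 1 else 0) - Pr (en t) x" for t x
  show thesis
  proof
    fix x y assume "x \<in> B" "y \<in> B"
    have "(\<Sum>t<card B. cnj (F t x) * F t y)
        = (\<Sum>t<card B. ((if x = en t then 1 else 0) - Pr x (en t)) * ((if y = en t then 1 else 0) - Pr (en t) y))"
      unfolding F_def by (intro sum.cong refl) (auto simp: herm)
    also have "\<dots> = (\<Sum>w\<in>B. ((if x = w then 1 else 0) - Pr x w) * ((if y = w then 1 else 0) - Pr w y))"
      by (rule sum.reindex_bij_betw[OF en])
    also have "\<dots> = (if x = y then 1 else 0) - Pr x y - Pr x y + (\<Sum>w\<in>B. Pr x w * Pr w y)"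
      using assms(1) \<open>x \<in> B\<close> \<open>y \<in> B\<close>
      by (simp add: algebra_simps sum.distrib sum_subtractf if_distrib[where f = "\<lambda>v. v * _"]
          if_distrib[where f = "\<lambda>v. _ * v"] cong: if_cong)
    finally show "(\<Sum>t<card B. cnj (F t x) * F t y) = (if x = y then 1 else 0) - Pr x y"
      using idem by simp
  next
    fix t v assume "t < card B" and v: "\<And>w. w \<in> B \<Longrightarrow> (\<Sum>x\<in>B. Pr w x * v x) = v w"
    then have "en t \<in> B"
      using en by (auto simp: bij_betw_def)
    then show "(\<Sum>x\<in>B. F t x * v x) = 0"
      using v[OF \<open>en t \<in> B\<close>] assms(1)
      by (simp add: F_def left_diff_distrib sum_subtractf if_distrib[where f = "\<lambda>a. a * _"] cong: if_cong)
  qed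
qed

section \<open>Recovery under the Knill-Laflamme conditions\<close>

(* A i x z is the amplitude of the encoded basis state i at the basis state (x, z) of the recovering
   subsystem B and its complement Z; the assumption is the Knill-Laflamme condition for the errors z. *)
locale knill_laflamme =
  fixes d :: nat and B :: "'x set" and Z :: "'z set" and A :: "nat \<Rightarrow> 'x \<Rightarrow> 'z \<Rightarrow> complex"
  assumes finite_B: "finite B" and finite_Z: "finite Z" and d_pos: "0 < d"
    and orthogonal: "\<And>i j z z'. i < d \<Longrightarrow> j < d \<Longrightarrow> z \<in> Z \<Longrightarrow> z' \<in> Z \<Longrightarrow>
      (\<Sum>x\<in>B. A i x z * cnj (A j x z')) = (if i = j then \<Sum>x\<in>B. A 0 x z * cnj (A 0 x z') else 0)"
begin

definition comb :: "nat \<Rightarrow> ('z \<Rightarrow> complex) \<Rightarrow> 'x \<Rightarrow> complex" where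
  "comb i \<alpha> = lincomb Z \<alpha> (\<lambda>z x. A i x z)"

lemma cinner_comb:
  assumes "i < d" "j < d"
  shows "cinner B (comb i \<alpha>) (comb j \<beta>) = (if i = j then cinner B (comb 0 \<alpha>) (comb 0 \<beta>) else 0)"
proof -
  have expand: "cinner B (comb i \<alpha>) (comb j \<beta>)
      = (\<Sum>z\<in>Z. \<Sum>z'\<in>Z. cnj (\<alpha> z) * \<beta> z' * (\<Sum>x\<in>B. A j x z' * cnj (A i x z)))" for i j
    unfolding cinner_def comb_def lincomb_def cnj_sum sum_product
    by (simp only: sum_distrib_left sum.swap[of _ B Z]) (simp add: mult_ac)
  have "cinner B (comb i \<alpha>) (comb j \<beta>)
      = (\<Sum>z\<in>Z. \<Sum>z'\<in>Z. cnj (\<alpha> z) * \<beta> z' * (if j = i then \<Sum>x\<in>B. A 0 x z' * cnj (A 0 x z) else 0))"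
    unfolding expand using orthogonal[OF assms(2,1)] by (intro sum.cong refl) simp
  then show ?thesis
    by (cases "i = j") (simp_all add: expand[of 0 0])
qed

context
  fixes r :: nat and cs :: "nat \<Rightarrow> 'z \<Rightarrow> complex"
  assumes orthonormal: "orthonormal_family B r (\<lambda>s. comb 0 (cs s))"
    and spans: "\<And>z x. z \<in> Z \<Longrightarrow> x \<in> B \<Longrightarrow>
      A 0 x z = (\<Sum>s<r. cinner B (comb 0 (cs s)) (\<lambda>x. A 0 x z) * comb 0 (cs s) x)"
begin

definition coef :: "nat \<Rightarrow> 'z \<Rightarrow> complex" where
  "coef s z = cinner B (comb 0 (cs s)) (\<lambda>x. A 0 x z)"

lemma cinner_comb_cs:
  assumes "a < d" "b < d" "s < r" "t < r"
  shows "cinner B (comb a (cs s)) (comb b (cs t)) = (if a = b \<and> s = t then 1 else 0)"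
  using cinner_comb[OF assms(1,2)] orthonormal assms(3,4) by (simp add: orthonormal_family_def)

lemma A_expansion:
  assumes "i < d" "z \<in> Z" "x \<in> B"
  shows "A i x z = (\<Sum>s<r. coef s z * comb i (cs s) x)"
proof -
  define \<alpha> where "\<alpha> z' = (if z' = z then 1 else 0) - (\<Sum>s<r. coef s z * cs s z')" for z'
  have res: "comb j \<alpha> y = A j y z - (\<Sum>s<r. coef s z * comb j (cs s) y)" for j y
    unfolding \<alpha>_def[abs_def] comb_def using lincomb_residual[OF finite_Z assms(2), where c = 1] by simp
  have "cinner B (comb i \<alpha>) (comb i \<alpha>) = cinner B (comb 0 \<alpha>) (comb 0 \<alpha>)"
    using cinner_comb[OF assms(1,1)] by simp
  also have "\<dots> = 0"
    unfolding cinner_def using spans[OF assms(2)] by (simp add: res coef_def)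
  finally have "comb i \<alpha> x = 0"
    using cinner_self_eq_0D[OF finite_B _ assms(3)] by blast
  then show ?thesis
    by (simp add: res)
qed

lemma cinner_comb_A:
  assumes "a < d" "i < d" "s < r" "z \<in> Z"
  shows "cinner B (comb a (cs s)) (\<lambda>x. A i x z) = (if a = i then coef s z else 0)"
proof -
  have "cinner B (comb a (cs s)) (\<lambda>x. A i x z) = cinner B (comb a (cs s)) (\<lambda>x. \<Sum>t<r. coef t z * comb i (cs t) x)"
    using A_expansion[OF assms(2,4)] by (intro cinner_cong) auto
  also have "\<dots> = (\<Sum>t<r. coef t z * (if a = i \<and> s = t then 1 else 0))"
    using cinner_comb_cs assms by (simp add: cinner_sum_right)
  finally show ?thesis
    using assms(3) by (cases "a = i") (simp_all add: if_distrib[where f = "\<lambda>v. _ * v"] cong: if_cong)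
qed

lemma sum_coef_norm:
  assumes "z \<in> Z"
  shows "(\<Sum>s<r. coef s z * cnj (coef s z)) = (\<Sum>x\<in>B. A 0 x z * cnj (A 0 x z))"
proof -
  have "(\<Sum>x\<in>B. A 0 x z * cnj (A 0 x z)) = cinner B (\<lambda>x. A 0 x z) (\<lambda>x. A 0 x z)"
    by (simp add: cinner_def mult.commute)
  also have "\<dots> = cinner B (\<lambda>x. A 0 x z) (\<lambda>x. \<Sum>s<r. coef s z * comb 0 (cs s) x)"
    using spans[OF assms] by (intro cinner_cong) (auto simp: coef_def)
  also have "\<dots> = (\<Sum>s<r. coef s z * cinner B (\<lambda>x. A 0 x z) (comb 0 (cs s)))"
    by (simp add: cinner_sum_right)
  also have "\<dots> = (\<Sum>s<r. coef s z * cnj (coef s z))"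
    by (simp add: coef_def cinner_commute[of B "\<lambda>x. A 0 x z"])
  finally show ?thesis ..
qed

definition code_projector :: "'x \<Rightarrow> 'x \<Rightarrow> complex" where
  "code_projector x y = (\<Sum>s<r. \<Sum>a<d. comb a (cs s) x * cnj (comb a (cs s) y))"

lemma code_projector_idem: "(\<Sum>w\<in>B. code_projector x w * code_projector w y) = code_projector x y"
proof -
  have "(\<Sum>w\<in>B. code_projector x w * code_projector w y)
      = (\<Sum>s<r. \<Sum>t<r. \<Sum>a<d. \<Sum>b<d. comb a (cs s) x * cnj (comb b (cs t) y) * cinner B (comb a (cs s)) (comb b (cs t)))"
    unfolding code_projector_def cinner_def sum_product
    by (simp only: sum_distrib_left sum.swap[of _ B "{..<r}"] sum.swap[of _ B "{..<d}"]) (simp add: mult_ac)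
  also have "\<dots> = (\<Sum>s<r. \<Sum>t<r. \<Sum>a<d. \<Sum>b<d. comb a (cs s) x * cnj (comb b (cs t) y) * (if a = b \<and> s = t then 1 else 0))"
    using cinner_comb_cs by (intro sum.cong refl) simp
  also have "\<dots> = (\<Sum>s<r. \<Sum>a<d. \<Sum>t<r. \<Sum>b<d. comb a (cs s) x * cnj (comb b (cs t) y) * (if a = b \<and> s = t then 1 else 0))"
    by (rule sum.cong[OF refl], rule sum.swap)
  also have "\<dots> = code_projector x y"
    unfolding code_projector_def using sum_delta_pair[where f = "\<lambda>t b. _ * cnj (comb b (cs t) y)"]
    by (intro sum.cong refl) (simp add: mult.assoc)
  finally show ?thesis .
qed

lemma code_projector_A:
  assumes "x \<in> B" "i < d" "z \<in> Z"
  shows "(\<Sum>w\<in>B. code_projector x w * A i w z) = A i x z"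
proof -
  have "(\<Sum>w\<in>B. code_projector x w * A i w z)
      = (\<Sum>s<r. \<Sum>a<d. comb a (cs s) x * cinner B (comb a (cs s)) (\<lambda>w. A i w z))"
    unfolding code_projector_def cinner_def
    by (simp only: sum_distrib_left sum_distrib_right sum.swap[of _ B "{..<r}"] sum.swap[of _ B "{..<d}"]) (simp add: mult_ac)
  also have "\<dots> = (\<Sum>s<r. comb i (cs s) x * coef s z)"
    using cinner_comb_A assms(2,3) by (simp add: if_distrib[where f = "\<lambda>v. _ * v"] cong: if_cong)
  finally show ?thesis
    using A_expansion[OF assms(2,3,1)] by (simp add: mult.commute)
qed

(* The first r operators send comb a (cs l) to the basis state a; the rows F of the projector onto the
   orthogonal complement of the code space complete the family. *)
definition recovery_kraus :: "(nat \<Rightarrow> 'x \<Rightarrow> complex) \<Rightarrow> nat \<Rightarrow> nat \<Rightarrow> 'x \<Rightarrow> complex" where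
  "recovery_kraus F l a x = (if l < r then cnj (comb a (cs l) x) else if a = 0 then F (l - r) x else 0)"

lemma kraus_complete_recovery_kraus:
  assumes F: "\<And>x y. x \<in> B \<Longrightarrow> y \<in> B \<Longrightarrow>
      (\<Sum>t<N. cnj (F t x) * F t y) = (if x = y then 1 else 0) - code_projector x y"
  shows "kraus_complete B {..<d} (r + N) (recovery_kraus F)"
  unfolding kraus_complete_def
proof (intro ballI)
  fix x y assume "x \<in> B" "y \<in> B"
  have "(\<Sum>l<r. \<Sum>a\<in>{..<d}. cnj (recovery_kraus F l a x) * recovery_kraus F l a y) = code_projector x y"
    by (simp add: recovery_kraus_def code_projector_def)
  moreover have "(\<Sum>a\<in>{..<d}. cnj (recovery_kraus F (r + t) a x) * recovery_kraus F (r + t) a y)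
      = cnj (F t x) * F t y" for t
    using d_pos
    by (simp add: recovery_kraus_def if_distrib[where f = cnj] if_distrib[where f = "\<lambda>v. v * _"] cong: if_cong)
  ultimately show "(\<Sum>l<r + N. \<Sum>a\<in>{..<d}. cnj (recovery_kraus F l a x) * recovery_kraus F l a y)
      = (if x = y then 1 else 0)"
    using F[OF \<open>x \<in> B\<close> \<open>y \<in> B\<close>] by (simp add: sum_lessThan_add)
qed

lemma recovery_kraus_A:
  assumes F_code: "\<And>t v. t < N \<Longrightarrow> (\<And>w. w \<in> B \<Longrightarrow> (\<Sum>x\<in>B. code_projector w x * v x) = v w) \<Longrightarrow>
      (\<Sum>x\<in>B. F t x * v x) = 0"
    and "l < r + N" "a < d" "i < d" "z \<in> Z"
  shows "(\<Sum>x\<in>B. recovery_kraus F l a x * A i x z) = (if a = i \<and> l < r then coef l z else 0)"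
proof (cases "l < r")
  case True
  then show ?thesis
    using cinner_comb_A[OF assms(3,4) True assms(5)] by (simp add: recovery_kraus_def cinner_def)
next
  case False
  have "(\<Sum>x\<in>B. F (l - r) x * A i x z) = 0"
    using F_code[of "l - r" "\<lambda>x. A i x z"] code_projector_A assms False by simp
  then show ?thesis
    using False by (cases "a = 0") (simp_all add: recovery_kraus_def)
qed

lemma recovery_from_basis:
  obtains mL L c where "kraus_complete B {..<d} mL L"
    and "\<And>l a i z. l < mL \<Longrightarrow> a < d \<Longrightarrow> i < d \<Longrightarrow> z \<in> Z \<Longrightarrow>
      (\<Sum>x\<in>B. L l a x * A i x z) = (if a = i then c l z else 0)"
    and "(\<Sum>l<mL. \<Sum>z\<in>Z. c l z * cnj (c l z)) = (\<Sum>z\<in>Z. \<Sum>x\<in>B. A 0 x z * cnj (A 0 x z))"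
proof -
  have herm: "cnj (code_projector x y) = code_projector y x" for x y
    by (simp add: code_projector_def mult.commute)
  obtain F :: "nat \<Rightarrow> 'x \<Rightarrow> complex" and N :: nat
    where F: "\<And>x y. x \<in> B \<Longrightarrow> y \<in> B \<Longrightarrow>
      (\<Sum>t<N. cnj (F t x) * F t y) = (if x = y then 1 else 0) - code_projector x y"
    and F_code: "\<And>t v. t < N \<Longrightarrow> (\<And>w. w \<in> B \<Longrightarrow> (\<Sum>x\<in>B. code_projector w x * v x) = v w) \<Longrightarrow>
      (\<Sum>x\<in>B. F t x * v x) = 0"
    by (rule projector_complement_rows[OF finite_B herm code_projector_idem]) iprover
  define c where "c l z = (if l < r then coef l z else 0)" for l z
  show thesis
  proof (rule that[OF kraus_complete_recovery_kraus[OF F]])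
    show "(\<Sum>x\<in>B. recovery_kraus F l a x * A i x z) = (if a = i then c l z else 0)"
      if "l < r + N" "a < d" "i < d" "z \<in> Z" for l a i z
      using recovery_kraus_A[OF F_code that] by (simp add: c_def)
    have "(\<Sum>l<r + N. \<Sum>z\<in>Z. c l z * cnj (c l z)) = (\<Sum>z\<in>Z. \<Sum>l<r. coef l z * cnj (coef l z))"
      by (simp add: sum_lessThan_add c_def sum.swap[of _ "{..<r}" Z])
    then show "(\<Sum>l<r + N. \<Sum>z\<in>Z. c l z * cnj (c l z)) = (\<Sum>z\<in>Z. \<Sum>x\<in>B. A 0 x z * cnj (A 0 x z))"
      using sum_coef_norm by simp
  qed
qed

end

lemma recovery:
  obtains mL L c where "kraus_complete B {..<d} mL L"
    and "\<And>l a i z. l < mL \<Longrightarrow> a < d \<Longrightarrow> i < d \<Longrightarrow> z \<in> Z \<Longrightarrow>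
      (\<Sum>x\<in>B. L l a x * A i x z) = (if a = i then c l z else 0)"
    and "(\<Sum>l<mL. \<Sum>z\<in>Z. c l z * cnj (c l z)) = (\<Sum>z\<in>Z. \<Sum>x\<in>B. A 0 x z * cnj (A 0 x z))"
proof -
  obtain r cs where "orthonormal_family B r (\<lambda>s. comb 0 (cs s))"
    and "\<forall>z\<in>Z. \<forall>x\<in>B. A 0 x z = (\<Sum>s<r. cinner B (comb 0 (cs s)) (\<lambda>x. A 0 x z) * comb 0 (cs s) x)"
    using gram_schmidt[OF finite_B finite_Z, of "\<lambda>z x. A 0 x z"] unfolding comb_def by blast
  then show thesis
    using recovery_from_basis that by blast
qed

end

section \<open>Schemes with an isometric encoding\<close>

locale isometric_encoding =
  fixes d n :: nat and dims :: "nat \<Rightarrow> nat" and V :: "(nat \<Rightarrow> nat) \<Rightarrow> nat \<Rightarrow> complex"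
    and E :: "(nat \<Rightarrow> nat \<Rightarrow> complex) \<Rightarrow> (nat \<Rightarrow> nat) \<Rightarrow> (nat \<Rightarrow> nat) \<Rightarrow> complex"
  assumes d_pos: "0 < d"
    and isometry: "kraus_complete {..<d} (basis dims {..<n}) 1 (\<lambda>_. V)"
    and encode: "\<And>\<rho> X Y. X \<in> basis dims {..<n} \<Longrightarrow> Y \<in> basis dims {..<n} \<Longrightarrow>
      E \<rho> X Y = kraus_map 1 (\<lambda>_. V) {..<d} \<rho> X Y"
begin

lemma encode_merge:
  assumes "P \<subseteq> {..<n}" "x \<in> basis dims P" "y \<in> basis dims P" "z \<in> basis dims ({..<n} - P)" "z' \<in> basis dims ({..<n} - P)"
  shows "E \<rho> (merge P x z) (merge P y z') = (\<Sum>i<d. \<Sum>j<d. V (merge P x z) i * \<rho> i j * cnj (V (merge P y z') j))"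
  using encode[OF merge_in_basis_lessThan[OF assms(1,2,4)] merge_in_basis_lessThan[OF assms(1,3,5)]]
  by (simp add: kraus_map_def)

lemma ptrace_encode:
  assumes "P \<subseteq> {..<n}" "x \<in> basis dims P" "y \<in> basis dims P"
  shows "ptrace n dims P (E \<rho>) x y
    = (\<Sum>z\<in>basis dims ({..<n} - P). \<Sum>i<d. \<Sum>j<d. V (merge P x z) i * \<rho> i j * cnj (V (merge P y z) j))"
  unfolding ptrace_def using encode_merge[OF assms] by simp

lemma ptrace_Diff_encode:
  assumes "P \<subseteq> {..<n}" "z \<in> basis dims ({..<n} - P)" "z' \<in> basis dims ({..<n} - P)"
  shows "ptrace n dims ({..<n} - P) (E \<rho>) z z'
    = (\<Sum>i<d. \<Sum>j<d. \<rho> i j * (\<Sum>x\<in>basis dims P. V (merge P x z) i * cnj (V (merge P x z') j)))"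
proof -
  have "ptrace n dims ({..<n} - P) (E \<rho>) z z'
      = (\<Sum>x\<in>basis dims P. \<Sum>i<d. \<Sum>j<d. V (merge P x z) i * \<rho> i j * cnj (V (merge P x z') j))"
    unfolding ptrace_Diff[OF assms] using encode_merge[OF assms(1) _ _ assms(2,3)] by simp
  also have "\<dots> = (\<Sum>i<d. \<Sum>j<d. \<rho> i j * (\<Sum>x\<in>basis dims P. V (merge P x z) i * cnj (V (merge P x z') j)))"
    by (simp only: sum_distrib_left sum.swap[of _ "basis dims P" "{..<d}"]) (simp add: mult_ac)
  finally show ?thesis .
qed

lemma unauthorized_orthogonal:
  assumes P: "P \<subseteq> {..<n}" and unauth: "unauthorized d n dims E ({..<n} - P)"
    and "i < d" "j < d" and z: "z \<in> basis dims ({..<n} - P)" "z' \<in> basis dims ({..<n} - P)"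
  shows "(\<Sum>x\<in>basis dims P. V (merge P x z) i * cnj (V (merge P x z') j))
    = (if i = j then \<Sum>x\<in>basis dims P. V (merge P x z) 0 * cnj (V (merge P x z') 0) else 0)"
proof -
  define G where "G i j = (\<Sum>x\<in>basis dims P. V (merge P x z) i * cnj (V (merge P x z') j))" for i j
  have form: "(\<Sum>a<d. \<Sum>b<d. \<rho> a b * G a b) = ptrace n dims ({..<n} - P) (E \<rho>) z z'" for \<rho>
    using ptrace_Diff_encode[OF P z] by (simp add: G_def)
  (* The complement of P is unauthorized, so the form with matrix G is constant on unit vectors. *)
  have "(\<lambda>i j. G i j - (if i = j then G 0 0 else 0)) i j = 0"
  proof (rule sesquilinear_form_eq_0[OF _ assms(3,4)])
    fix \<psi> :: "nat \<Rightarrow> complex" assume unit: "(\<Sum>a<d. (cmod (\<psi> a))\<^sup>2) = 1"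
    have "(\<Sum>a<d. \<Sum>b<d. \<psi> a * cnj (\<psi> b) * G a b) = ptrace n dims ({..<n} - P) (E (proj \<psi>)) z z'"
      using form[of "proj \<psi>"] by (simp add: proj_def)
    also have "\<dots> = ptrace n dims ({..<n} - P) (E (proj (ket 0))) z z'"
      using unauth[unfolded unauthorized_def, THEN conjunct2, rule_format,
          OF density_proj[OF finite_lessThan unit] density_ket[OF finite_lessThan] z] d_pos by simp
    also have "\<dots> = G 0 0"
      using form[of "proj (ket 0)"] sum_sum_delta[OF d_pos d_pos, of G 1 1]
      by (simp add: proj_def ket_def mult.commute)
    finally have "(\<Sum>a<d. \<Sum>b<d. \<psi> a * cnj (\<psi> b) * G a b) = G 0 0" .
    moreover have "(\<Sum>a<d. \<Sum>b<d. \<psi> a * cnj (\<psi> b) * (if a = b then G 0 0 else 0)) = G 0 0"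
    proof -
      have "complex_of_real (\<Sum>a<d. (cmod (\<psi> a))\<^sup>2) = 1"
        using unit by simp
      then have "(\<Sum>a<d. \<psi> a * cnj (\<psi> a)) = 1"
        by (simp only: of_real_sum complex_norm_square)
      then show ?thesis
        by (simp add: if_distrib[where f = "\<lambda>v. _ * v"] sum_distrib_right[symmetric] cong: if_cong)
    qed
    ultimately show "(\<Sum>a<d. \<Sum>b<d. \<psi> a * cnj (\<psi> b) * (\<lambda>i j. G i j - (if i = j then G 0 0 else 0)) a b) = 0"
      by (simp add: right_diff_distrib sum_subtractf)
  qed
  then show ?thesis
    by (simp add: G_def)
qed

lemma isometry_norm_merge:
  assumes "P \<subseteq> {..<n}"
  shows "(\<Sum>z\<in>basis dims ({..<n} - P). \<Sum>x\<in>basis dims P. V (merge P x z) 0 * cnj (V (merge P x z) 0)) = 1"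
proof -
  have "(\<Sum>z\<in>basis dims ({..<n} - P). \<Sum>x\<in>basis dims P. V (merge P x z) 0 * cnj (V (merge P x z) 0))
      = (\<Sum>X\<in>basis dims {..<n}. cnj (V X 0) * V X 0)"
    unfolding sum_basis_split[OF assms] by (subst sum.swap) (simp add: mult.commute)
  also have "\<dots> = 1"
    using isometry d_pos unfolding kraus_complete_def by simp
  finally show ?thesis .
qed

lemma unauthorized_Diff_authorized:
  assumes "unauthorized d n dims E Q"
  shows "authorized d n dims E ({..<n} - Q)"
proof -
  define P where "P = {..<n} - Q"
  have Q: "Q \<subseteq> {..<n}"
    using assms unfolding unauthorized_def by blast
  then have P: "P \<subseteq> {..<n}" and PQ: "{..<n} - P = Q"
    by (auto simp: P_def)
  let ?BP = "basis dims P" and ?BQ = "basis dims ({..<n} - P)"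
  interpret code: knill_laflamme d ?BP ?BQ "\<lambda>i x z. V (merge P x z) i"
    using d_pos unauthorized_orthogonal[OF P] assms
    by unfold_locales (simp_all add: PQ finite_basis_subset[OF P] finite_basis_subset[OF Q])
  obtain mL L c where L: "kraus_complete ?BP {..<d} mL L"
    and Lc: "\<And>l a i z. l < mL \<Longrightarrow> a < d \<Longrightarrow> i < d \<Longrightarrow> z \<in> ?BQ \<Longrightarrow>
      (\<Sum>x\<in>?BP. L l a x * V (merge P x z) i) = (if a = i then c l z else 0)"
    and norm: "(\<Sum>l<mL. \<Sum>z\<in>?BQ. c l z * cnj (c l z))
      = (\<Sum>z\<in>?BQ. \<Sum>x\<in>?BP. V (merge P x z) 0 * cnj (V (merge P x z) 0))"
    using code.recovery by blast
  note norm1 = norm[unfolded isometry_norm_merge[OF P]]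
  have "kraus_map mL L ?BP (ptrace n dims P (E \<rho>)) a b = \<rho> a b" if "a < d" "b < d" for \<rho> a b
  proof -
    have "kraus_map mL L ?BP (ptrace n dims P (E \<rho>))
        = kraus_map mL L ?BP (\<lambda>x y. \<Sum>z\<in>?BQ. \<Sum>i<d. \<Sum>j<d. V (merge P x z) i * \<rho> i j * cnj (V (merge P y z) j))"
      using ptrace_encode[OF P] by (intro kraus_map_cong) simp
    then show ?thesis
      using kraus_map_scalar_recovers[where W = "\<lambda>z i x. V (merge P x z) i", OF finite_basis_subset[OF P] Lc norm1 that]
      by simp
  qed
  with P L show ?thesis
    unfolding authorized_def is_channel_iff_kraus P_def[symmetric] by blast
qed

end

section \<open>Schemes with a Kraus encoding\<close>

lemma authorized_kraus_recovery:
  assumes "authorized d n dims E P"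
  obtains mL L where "kraus_complete (basis dims P) {..<d} mL L"
    and "\<And>\<rho> a b. density {..<d} \<rho> \<Longrightarrow> a < d \<Longrightarrow> b < d \<Longrightarrow>
           kraus_map mL L (basis dims P) (ptrace n dims P (E \<rho>)) a b = \<rho> a b"
  using assms unfolding authorized_def is_channel_iff_kraus by blast

lemma not_authorized_and_unauthorized:
  fixes d :: nat
  assumes "2 \<le> d" "authorized d n dims E P"
  shows "\<not> unauthorized d n dims E P"
proof
  assume unauth: "unauthorized d n dims E P"
  obtain mL L where "kraus_complete (basis dims P) {..<d} mL L"
    and rec: "\<And>\<rho> a b. density {..<d} \<rho> \<Longrightarrow> a < d \<Longrightarrow> b < d \<Longrightarrow>
      kraus_map mL L (basis dims P) (ptrace n dims P (E \<rho>)) a b = \<rho> a b"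
    using authorized_kraus_recovery[OF assms(2)] by blast
  have d: "0 < d" "1 < d"
    using assms(1) by auto
  have dens: "density {..<d} (proj (ket 0))" "density {..<d} (proj (ket 1))"
    using d by (auto intro: density_ket)
  have "ptrace n dims P (E (proj (ket 0))) x y = ptrace n dims P (E (proj (ket 1))) x y"
    if "x \<in> basis dims P" "y \<in> basis dims P" for x y
    using unauth[unfolded unauthorized_def, THEN conjunct2, rule_format, OF dens that] .
  then have "kraus_map mL L (basis dims P) (ptrace n dims P (E (proj (ket 0))))
      = kraus_map mL L (basis dims P) (ptrace n dims P (E (proj (ket 1))))"
    by (rule kraus_map_cong)
  moreover have "kraus_map mL L (basis dims P) (ptrace n dims P (E (proj (ket 0)))) 0 0 = 1"
    using rec[OF dens(1) d(1) d(1)] by (simp add: proj_def ket_def)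
  moreover have "kraus_map mL L (basis dims P) (ptrace n dims P (E (proj (ket 1)))) 0 0 = 0"
    using rec[OF dens(2) d(1) d(1)] by (simp add: proj_def ket_def)
  ultimately show False
    by simp
qed

locale kraus_encoding =
  fixes d n :: nat and dims :: "nat \<Rightarrow> nat" and m :: nat
    and K :: "nat \<Rightarrow> (nat \<Rightarrow> nat) \<Rightarrow> nat \<Rightarrow> complex"
  assumes two_le_d: "2 \<le> d"
    and complete: "kraus_complete {..<d} (basis dims {..<n}) m K"
begin

abbreviation E :: "(nat \<Rightarrow> nat \<Rightarrow> complex) \<Rightarrow> (nat \<Rightarrow> nat) \<Rightarrow> (nat \<Rightarrow> nat) \<Rightarrow> complex" where
  "E \<equiv> kraus_map m K {..<d}"

lemma trace_E:
  assumes "density {..<d} \<rho>"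
  shows "(\<Sum>X\<in>basis dims {..<n}. E \<rho> X X) = 1"
proof -
  have "(\<Sum>X\<in>basis dims {..<n}. E \<rho> X X)
     = (\<Sum>i<d. \<Sum>j<d. \<rho> i j * (\<Sum>k<m. \<Sum>X\<in>basis dims {..<n}. cnj (K k X j) * K k X i))"
    unfolding kraus_map_def
    by (simp only: sum_distrib_left sum.swap[of _ "basis dims {..<n}" "{..<m}"]
        sum.swap[of _ "basis dims {..<n}" "{..<d}"] sum.swap[of _ "{..<m}" "{..<d}"]) (simp add: mult_ac)
  also have "\<dots> = (\<Sum>i<d. \<Sum>j<d. \<rho> i j * (if j = i then 1 else 0))"
    using complete unfolding kraus_complete_def by (intro sum.cong refl) simp
  also have "\<dots> = (\<Sum>i<d. \<rho> i i)"
    by (simp add: if_distrib[where f = "\<lambda>a. _ * a"] cong: if_cong)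
  also have "\<dots> = 1"
    using assms unfolding density_def by blast
  finally show ?thesis .
qed

lemma unauthorized_empty: "unauthorized d n dims E {}"
  unfolding unauthorized_def ptrace_def
  by (simp add: merge_def trace_E)

(* Kraus operators of the recovery channel L after the partial trace over the complement of P: the index
   (l, z, k) combines the recovery operator l, the traced-out basis state z and the encoding operator k. *)
definition composite_kraus :: "(nat \<Rightarrow> nat \<Rightarrow> (nat \<Rightarrow> nat) \<Rightarrow> complex) \<Rightarrow> nat set
    \<Rightarrow> nat \<times> (nat \<Rightarrow> nat) \<times> nat \<Rightarrow> nat \<Rightarrow> nat \<Rightarrow> complex" where
  "composite_kraus L P = (\<lambda>(l, z, k) a i. \<Sum>x\<in>basis dims P. L l a x * K k (merge P x z) i)"

lemma composite_kraus_identity: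
  assumes rec: "\<And>\<rho> a b. density {..<d} \<rho> \<Longrightarrow> a < d \<Longrightarrow> b < d \<Longrightarrow>
      kraus_map mL L (basis dims P) (ptrace n dims P (E \<rho>)) a b = \<rho> a b"
    and "(\<Sum>i<d. (cmod (\<psi> i))\<^sup>2) = 1" "a < d" "b < d"
  shows "(\<Sum>\<alpha>\<in>{..<mL} \<times> basis dims ({..<n} - P) \<times> {..<m}.
      (\<Sum>i<d. composite_kraus L P \<alpha> a i * \<psi> i) * cnj (\<Sum>j<d. composite_kraus L P \<alpha> b j * \<psi> j))
    = \<psi> a * cnj (\<psi> b)"
proof -
  let ?BP = "basis dims P" and ?BQ = "basis dims ({..<n} - P)"
  define u where "u = (\<lambda>(z, k) x. \<Sum>i<d. K k (merge P x z) i * \<psi> i)"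
  have "ptrace n dims P (E (proj \<psi>)) = (\<lambda>x y. \<Sum>c\<in>?BQ \<times> {..<m}. u c x * cnj (u c y))"
    unfolding ptrace_def kraus_map_proj u_def by (simp add: sum.cartesian_product split_def)
  then have "\<psi> a * cnj (\<psi> b) = (\<Sum>c\<in>?BQ \<times> {..<m}. kraus_map mL L ?BP (proj (u c)) a b)"
    using rec[OF density_proj[OF finite_lessThan assms(2)] assms(3,4)]
    by (simp add: proj_def kraus_map_sum_outer finite_basis)
  also have "\<dots> = (\<Sum>l<mL. \<Sum>c\<in>?BQ \<times> {..<m}.
      (\<Sum>x\<in>?BP. L l a x * u c x) * cnj (\<Sum>y\<in>?BP. L l b y * u c y))"
    unfolding kraus_map_proj by (rule sum.swap)
  also have "\<dots> = (\<Sum>\<alpha>\<in>{..<mL} \<times> ?BQ \<times> {..<m}.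
      (\<Sum>i<d. composite_kraus L P \<alpha> a i * \<psi> i) * cnj (\<Sum>j<d. composite_kraus L P \<alpha> b j * \<psi> j))"
  proof -
    have Lu: "(\<Sum>x\<in>?BP. L l a' x * u (z, k) x) = (\<Sum>i<d. composite_kraus L P (l, z, k) a' i * \<psi> i)" for l z k a'
      unfolding u_def composite_kraus_def
      by (simp only: prod.case sum_distrib_left sum_distrib_right sum.swap[of _ ?BP "{..<d}"]) (simp add: mult_ac)
    then show ?thesis
      unfolding sum.cartesian_product by (intro sum.cong refl) (clarsimp simp: Lu simp del: cnj_sum)
  qed
  finally show ?thesis ..
qed

lemma authorized_kraus_scalar:
  assumes "authorized d n dims E P"
  obtains mL L c where "kraus_complete (basis dims P) {..<d} mL L"
    and "\<And>l z k a i. l < mL \<Longrightarrow> z \<in> basis dims ({..<n} - P) \<Longrightarrow> k < m \<Longrightarrow> a < d \<Longrightarrow> i < d \<Longrightarrow>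
           (\<Sum>x\<in>basis dims P. L l a x * K k (merge P x z) i) = (if a = i then c l z k else 0)"
    and "(\<Sum>l<mL. \<Sum>z\<in>basis dims ({..<n} - P). \<Sum>k<m. c l z k * cnj (c l z k)) = 1"
proof -
  obtain mL L where L: "kraus_complete (basis dims P) {..<d} mL L"
    and rec: "\<And>\<rho> a b. density {..<d} \<rho> \<Longrightarrow> a < d \<Longrightarrow> b < d \<Longrightarrow>
           kraus_map mL L (basis dims P) (ptrace n dims P (E \<rho>)) a b = \<rho> a b"
    using authorized_kraus_recovery[OF assms] by blast
  let ?S = "{..<mL} \<times> basis dims ({..<n} - P) \<times> {..<m}"
  have "finite ?S" "0 < d"
    using two_le_d by (simp_all add: finite_basis)
  note scalar = identity_on_pure_states_scalar[OF this composite_kraus_identity[OF rec]]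
  show thesis
  proof (rule that[OF L])
    show "(\<Sum>x\<in>basis dims P. L l a x * K k (merge P x z) i) = (if a = i then composite_kraus L P (l, z, k) 0 0 else 0)"
      if "l < mL" "z \<in> basis dims ({..<n} - P)" "k < m" "a < d" "i < d" for l z k a i
      using scalar(1)[of "(l, z, k)" a i] that by (simp add: composite_kraus_def)
    show "(\<Sum>l<mL. \<Sum>z\<in>basis dims ({..<n} - P). \<Sum>k<m.
        composite_kraus L P (l, z, k) 0 0 * cnj (composite_kraus L P (l, z, k) 0 0)) = 1"
      using scalar(2) by (simp add: sum.cartesian_product)
  qed
qed

lemma authorized_kraus_orthogonal:
  assumes "authorized d n dims E P"
  obtains C where "\<And>z z' k i j. z \<in> basis dims ({..<n} - P) \<Longrightarrow> z' \<in> basis dims ({..<n} - P) \<Longrightarrow>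
      k < m \<Longrightarrow> i < d \<Longrightarrow> j < d \<Longrightarrow>
      (\<Sum>x\<in>basis dims P. K k (merge P x z) i * cnj (K k (merge P x z') j)) = (if i = j then C z z' k else 0)"
proof -
  let ?BP = "basis dims P" and ?BQ = "basis dims ({..<n} - P)"
  obtain mL L c where L: "kraus_complete ?BP {..<d} mL L"
    and Lc: "\<And>l z k a i. l < mL \<Longrightarrow> z \<in> ?BQ \<Longrightarrow> k < m \<Longrightarrow> a < d \<Longrightarrow> i < d \<Longrightarrow>
           (\<Sum>x\<in>?BP. L l a x * K k (merge P x z) i) = (if a = i then c l z k else 0)"
    and "(\<Sum>l<mL. \<Sum>z\<in>?BQ. \<Sum>k<m. c l z k * cnj (c l z k)) = 1"
    using authorized_kraus_scalar[OF assms] by blast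
  have P: "P \<subseteq> {..<n}"
    using assms unfolding authorized_def by blast
  show thesis
  proof (rule that)
    fix z z' k i j assume "z \<in> ?BQ" "z' \<in> ?BQ" "k < m" "i < d" "j < d"
    have "(\<Sum>x\<in>?BP. K k (merge P x z) i * cnj (K k (merge P x z') j))
        = (\<Sum>l<mL. \<Sum>a<d. (\<Sum>x\<in>?BP. L l a x * K k (merge P x z) i) * cnj (\<Sum>x\<in>?BP. L l a x * K k (merge P x z') j))"
      using kraus_complete_sum_inner[OF finite_basis_subset[OF P] L] by simp
    also have "\<dots> = (\<Sum>l<mL. \<Sum>a<d. (if a = i then c l z k else 0) * cnj (if a = j then c l z' k else 0))"
      using Lc \<open>z \<in> ?BQ\<close> \<open>z' \<in> ?BQ\<close> \<open>k < m\<close> \<open>i < d\<close> \<open>j < d\<close> by simp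
    also have "\<dots> = (if i = j then \<Sum>l<mL. c l z k * cnj (c l z' k) else 0)"
      using \<open>i < d\<close> \<open>j < d\<close> by (simp add: if_distrib[where f = "\<lambda>x. x * _"] cong: if_cong)
    finally show "(\<Sum>x\<in>?BP. K k (merge P x z) i * cnj (K k (merge P x z') j))
        = (if i = j then \<Sum>l<mL. c l z k * cnj (c l z' k) else 0)" .
  qed
qed

lemma authorized_Diff_unauthorized:
  assumes "authorized d n dims E P"
  shows "unauthorized d n dims E ({..<n} - P)"
proof -
  let ?BP = "basis dims P" and ?BQ = "basis dims ({..<n} - P)"
  obtain C where KK: "\<And>z z' k i j. z \<in> ?BQ \<Longrightarrow> z' \<in> ?BQ \<Longrightarrow> k < m \<Longrightarrow> i < d \<Longrightarrow> j < d \<Longrightarrow>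
      (\<Sum>x\<in>?BP. K k (merge P x z) i * cnj (K k (merge P x z') j)) = (if i = j then C z z' k else 0)"
    using authorized_kraus_orthogonal[OF assms] by blast
  have P: "P \<subseteq> {..<n}"
    using assms unfolding authorized_def by blast
  have "ptrace n dims ({..<n} - P) (E \<rho>) z z' = (\<Sum>k<m. C z z' k)"
    if dens: "density {..<d} \<rho>" and z: "z \<in> ?BQ" "z' \<in> ?BQ" for \<rho> z z'
  proof -
    have "ptrace n dims ({..<n} - P) (E \<rho>) z z'
        = (\<Sum>k<m. \<Sum>i<d. \<Sum>j<d. \<rho> i j * (\<Sum>x\<in>?BP. K k (merge P x z) i * cnj (K k (merge P x z') j)))"
      unfolding ptrace_Diff[OF P z] kraus_map_def
      by (simp only: sum_distrib_left sum.swap[of _ ?BP "{..<m}"] sum.swap[of _ ?BP "{..<d}"]) (simp add: mult_ac)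
    also have "\<dots> = (\<Sum>k<m. \<Sum>i<d. \<Sum>j<d. \<rho> i j * (if i = j then C z z' k else 0))"
      using KK z by simp
    also have "\<dots> = (\<Sum>k<m. (\<Sum>i<d. \<rho> i i) * C z z' k)"
      by (simp add: if_distrib[where f = "\<lambda>x. _ * x"] sum_distrib_right cong: if_cong)
    also have "(\<Sum>i<d. \<rho> i i) = 1"
      using dens unfolding density_def by blast
    finally show ?thesis
      by simp
  qed
  then show ?thesis
    unfolding unauthorized_def by auto
qed

lemma pure_qss_kraus_parallel:
  assumes "pure_qss d n dims E" "i < d"
  obtains \<phi> \<beta> where "\<And>k X. k < m \<Longrightarrow> X \<in> basis dims {..<n} \<Longrightarrow> K k X i = \<beta> k * \<phi> X"
proof -
  let ?BN = "basis dims {..<n}"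
  have "pure_state {..<d} (proj (ket i))"
    unfolding pure_state_def using norm_ket[of "{..<d}" i] assms(2)
    by (intro exI[of _ "ket i"]) (simp add: proj_def)
  then have "pure_state ?BN (E (proj (ket i)))"
    using assms(1) unfolding pure_qss_def by blast
  then obtain \<phi> where "(\<Sum>X\<in>?BN. (cmod (\<phi> X))\<^sup>2) = 1"
    and \<phi>: "\<forall>X\<in>?BN. \<forall>Y\<in>?BN. E (proj (ket i)) X Y = \<phi> X * cnj (\<phi> Y)"
    unfolding pure_state_def by blast
  then have norm: "cinner ?BN \<phi> \<phi> = 1"
    by (simp add: cinner_self)
  have "E (proj (ket i)) X Y = (\<Sum>k<m. K k X i * cnj (K k Y i))" for X Y
    using assms(2) by (simp add: kraus_map_proj sum_mult_ket)
  with \<phi> have outer: "(\<Sum>k<m. K k X i * cnj (K k Y i)) = \<phi> X * cnj (\<phi> Y)" if "X \<in> ?BN" "Y \<in> ?BN" for X Y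
    using that by simp
  have "K k X i = cinner ?BN \<phi> (\<lambda>X. K k X i) * \<phi> X" if "k < m" "X \<in> ?BN" for k X
    using sum_outer_eq_outer_parallel[where u = "\<lambda>k X. K k X i", OF finite_basis[OF finite_lessThan] norm outer that] .
  then show thesis
    by (rule that)
qed

lemma pure_qss_kraus_column_proportional:
  assumes "pure_qss d n dims E" "P \<subseteq> {..<n}" "z0 \<in> basis dims ({..<n} - P)"
    and Lc: "\<And>k a i. k < m \<Longrightarrow> a < d \<Longrightarrow> i < d \<Longrightarrow>
      (\<Sum>x\<in>basis dims P. L a x * K k (merge P x z0) i) = (if a = i then \<gamma> k else 0)"
    and "k < m" "k0 < m" "X \<in> basis dims {..<n}" "i < d"
  shows "K k X i * \<gamma> k0 = \<gamma> k * K k0 X i"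
proof -
  obtain \<phi> \<beta> where \<phi>: "\<And>k X. k < m \<Longrightarrow> X \<in> basis dims {..<n} \<Longrightarrow> K k X i = \<beta> k * \<phi> X"
    using assms(8) by (auto intro: pure_qss_kraus_parallel[OF assms(1), of i])
  define w where "w = (\<Sum>x\<in>basis dims P. L i x * \<phi> (merge P x z0))"
  have \<gamma>: "\<gamma> k' = \<beta> k' * w" if "k' < m" for k'
  proof -
    have "\<gamma> k' = (\<Sum>x\<in>basis dims P. L i x * K k' (merge P x z0) i)"
      using Lc[OF that assms(8,8)] by simp
    also have "\<dots> = \<beta> k' * w"
      unfolding w_def sum_distrib_left
      using \<phi>[OF that] merge_in_basis_lessThan[OF assms(2) _ assms(3)] by (intro sum.cong refl) (simp add: mult_ac)
    finally show ?thesis .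
  qed
  show ?thesis
    using \<phi>[OF assms(5,7)] \<phi>[OF assms(6,7)] \<gamma>[OF assms(5)] \<gamma>[OF assms(6)] by (simp add: mult_ac)
qed

lemma pure_qss_kraus_proportional:
  assumes "pure_qss d n dims E" "authorized d n dims E P"
  obtains k0 \<gamma> where "k0 < m" "\<gamma> k0 \<noteq> 0"
    and "\<And>k X i. k < m \<Longrightarrow> X \<in> basis dims {..<n} \<Longrightarrow> i \<in> {..<d} \<Longrightarrow> K k X i * \<gamma> k0 = \<gamma> k * K k0 X i"
proof -
  let ?BP = "basis dims P" and ?BQ = "basis dims ({..<n} - P)"
  obtain mL L c where "kraus_complete ?BP {..<d} mL L"
    and Lc: "\<And>l z k a i. l < mL \<Longrightarrow> z \<in> ?BQ \<Longrightarrow> k < m \<Longrightarrow> a < d \<Longrightarrow> i < d \<Longrightarrow>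
           (\<Sum>x\<in>?BP. L l a x * K k (merge P x z) i) = (if a = i then c l z k else 0)"
    and norm: "(\<Sum>l<mL. \<Sum>z\<in>?BQ. \<Sum>k<m. c l z k * cnj (c l z k)) = 1"
    using authorized_kraus_scalar[OF assms(2)] by blast
  have P: "P \<subseteq> {..<n}"
    using assms(2) unfolding authorized_def by blast
  have "\<exists>l<mL. \<exists>z\<in>?BQ. \<exists>k<m. c l z k \<noteq> 0"
  proof (rule ccontr)
    assume "\<not> ?thesis"
    then have "(\<Sum>l<mL. \<Sum>z\<in>?BQ. \<Sum>k<m. c l z k * cnj (c l z k)) = 0"
      by (auto intro!: sum.neutral)
    with norm show False
      by simp
  qed
  then obtain l0 z0 k0 where l0: "l0 < mL" and z0: "z0 \<in> ?BQ" and k0: "k0 < m" and "c l0 z0 k0 \<noteq> 0"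
    by blast
  have "K k X i * c l0 z0 k0 = c l0 z0 k * K k0 X i"
    if "k < m" "X \<in> basis dims {..<n}" "i \<in> {..<d}" for k X i
    using pure_qss_kraus_column_proportional[OF assms(1) P z0 Lc[OF l0 z0] that(1) k0 that(2)] that(3) by simp
  with k0 \<open>c l0 z0 k0 \<noteq> 0\<close> show thesis
    by (rule that)
qed

lemma pure_qss_isometric:
  assumes "pure_qss d n dims E" "authorized d n dims E P"
  obtains V where "kraus_complete {..<d} (basis dims {..<n}) 1 (\<lambda>_. V)"
    and "\<And>\<rho> X Y. X \<in> basis dims {..<n} \<Longrightarrow> Y \<in> basis dims {..<n} \<Longrightarrow>
      E \<rho> X Y = kraus_map 1 (\<lambda>_. V) {..<d} \<rho> X Y"
proof -
  obtain k0 \<gamma> where "k0 < m" "\<gamma> k0 \<noteq> 0"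
    and proportional: "\<And>k X i. k < m \<Longrightarrow> X \<in> basis dims {..<n} \<Longrightarrow> i \<in> {..<d} \<Longrightarrow>
      K k X i * \<gamma> k0 = \<gamma> k * K k0 X i"
    by (rule pure_qss_kraus_proportional[OF assms]) iprover
  show thesis
    using proportional that by (rule kraus_complete_proportional[where \<gamma> = \<gamma>, OF complete \<open>k0 < m\<close> \<open>\<gamma> k0 \<noteq> 0\<close>])
qed

lemma pure_qss_unauthorized_Diff_authorized:
  assumes "pure_qss d n dims E" "authorized d n dims E P" "unauthorized d n dims E Q"
  shows "authorized d n dims E ({..<n} - Q)"
proof -
  obtain V where "kraus_complete {..<d} (basis dims {..<n}) 1 (\<lambda>_. V)"
    and "\<And>\<rho> X Y. X \<in> basis dims {..<n} \<Longrightarrow> Y \<in> basis dims {..<n} \<Longrightarrow>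
      E \<rho> X Y = kraus_map 1 (\<lambda>_. V) {..<d} \<rho> X Y"
    using pure_qss_isometric[OF assms(1,2)] by blast
  then interpret isometric_encoding d n dims V E
    using two_le_d by unfold_locales simp_all
  show ?thesis
    using unauthorized_Diff_authorized[OF assms(3)] .
qed

end

section \<open>Thresholds\<close>

lemma Least_threshold:
  fixes n :: nat and auth :: "nat set \<Rightarrow> bool"
  defines "t \<equiv> LEAST t. \<forall>P\<subseteq>{..<n}. t \<le> card P \<longrightarrow> auth P"
  shows "\<And>P. P \<subseteq> {..<n} \<Longrightarrow> t \<le> card P \<Longrightarrow> auth P"
    and "\<And>t'. \<forall>P\<subseteq>{..<n}. t' \<le> card P \<longrightarrow> auth P \<Longrightarrow> t \<le> t'"
proof -
  have "\<forall>P\<subseteq>{..<n}. n + 1 \<le> card P \<longrightarrow> auth P"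
  proof (intro allI impI)
    fix P assume "P \<subseteq> {..<n}" "n + 1 \<le> card P"
    then show "auth P"
      using card_mono[OF finite_lessThan \<open>P \<subseteq> {..<n}\<close>] by simp
  qed
  then have "\<forall>P\<subseteq>{..<n}. t \<le> card P \<longrightarrow> auth P"
    unfolding t_def by (rule LeastI)
  then show "\<And>P. P \<subseteq> {..<n} \<Longrightarrow> t \<le> card P \<Longrightarrow> auth P"
    by blast
  show "\<And>t'. \<forall>P\<subseteq>{..<n}. t' \<le> card P \<longrightarrow> auth P \<Longrightarrow> t \<le> t'"
    unfolding t_def by (rule Least_le)
qed

lemma Greatest_threshold:
  fixes n b :: nat and unauth :: "nat set \<Rightarrow> bool"
  assumes "unauth {}" and bound: "\<forall>z. (\<forall>P\<subseteq>{..<n}. card P \<le> z \<longrightarrow> unauth P) \<longrightarrow> z \<le> b"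
  defines "z \<equiv> GREATEST z. \<forall>P\<subseteq>{..<n}. card P \<le> z \<longrightarrow> unauth P"
  shows "\<And>P. P \<subseteq> {..<n} \<Longrightarrow> card P \<le> z \<Longrightarrow> unauth P"
    and "\<And>z'. \<forall>P\<subseteq>{..<n}. card P \<le> z' \<longrightarrow> unauth P \<Longrightarrow> z' \<le> z"
    and "z \<le> b"
proof -
  let ?Q = "\<lambda>z. \<forall>P\<subseteq>{..<n}. card P \<le> z \<longrightarrow> unauth P"
  have bound': "y \<le> b" if "?Q y" for y
    using bound[THEN spec, THEN mp, OF that] .
  have "?Q 0"
  proof (intro allI impI)
    fix P assume "P \<subseteq> {..<n}" "card P \<le> 0"
    then have "P = {}"
      using finite_subset[OF \<open>P \<subseteq> {..<n}\<close> finite_lessThan] by simp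
    then show "unauth P"
      using assms(1) by simp
  qed
  then have z: "?Q z"
    unfolding z_def by (rule GreatestI_nat[where P = ?Q, OF _ bound'])
  then show "\<And>P. P \<subseteq> {..<n} \<Longrightarrow> card P \<le> z \<Longrightarrow> unauth P"
    by blast
  show "z' \<le> z" if "?Q z'" for z'
    unfolding z_def by (rule Greatest_le_nat[where P = ?Q, OF that bound'])
  show "z \<le> b"
    by (rule bound'[OF z])
qed

context
  fixes n :: nat and auth unauth :: "nat set \<Rightarrow> bool" and P0 :: "nat set"
  assumes P0: "auth P0" "P0 \<subseteq> {..<n}" and unauth_empty: "unauth {}"
    and disjoint: "\<And>P. auth P \<Longrightarrow> \<not> unauth P"
    and auth_Diff: "\<And>P. P \<subseteq> {..<n} \<Longrightarrow> auth P \<Longrightarrow> unauth ({..<n} - P)"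
begin

lemma unauth_threshold_le_card: "\<forall>z. (\<forall>P\<subseteq>{..<n}. card P \<le> z \<longrightarrow> unauth P) \<longrightarrow> z \<le> card P0"
  using P0 disjoint by (meson nat_le_linear)

lemmas auth_threshold = Least_threshold[where n = n and auth = auth]

lemmas unauth_threshold =
  Greatest_threshold[where n = n and unauth = unauth and b = "card P0", OF unauth_empty unauth_threshold_le_card]

lemma threshold_le:
  "n \<le> (LEAST t. \<forall>P\<subseteq>{..<n}. t \<le> card P \<longrightarrow> auth P) + (GREATEST z. \<forall>P\<subseteq>{..<n}. card P \<le> z \<longrightarrow> unauth P)"
  (is "n \<le> ?t + ?z")
proof (cases "?t \<le> n")
  case True
  have "\<forall>P\<subseteq>{..<n}. card P \<le> n - ?t \<longrightarrow> unauth P"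
  proof (intro allI impI)
    fix P assume P: "P \<subseteq> {..<n}" "card P \<le> n - ?t"
    then have "?t \<le> card ({..<n} - P)"
      using card_Diff_subset[OF finite_subset[OF P(1)] P(1)] True by simp
    then have "auth ({..<n} - P)"
      by (rule auth_threshold(1)[OF Diff_subset])
    then show "unauth P"
      using auth_Diff[of "{..<n} - P"] double_diff[OF P(1) subset_refl] by simp
  qed
  then have "n - ?t \<le> ?z"
    by (rule unauth_threshold(2))
  then show ?thesis
    by simp
qed simp

lemma threshold_eq:
  assumes unauth_Diff: "\<And>Q. Q \<subseteq> {..<n} \<Longrightarrow> unauth Q \<Longrightarrow> auth ({..<n} - Q)"
  shows "n = (LEAST t. \<forall>P\<subseteq>{..<n}. t \<le> card P \<longrightarrow> auth P) + (GREATEST z. \<forall>P\<subseteq>{..<n}. card P \<le> z \<longrightarrow> unauth P)"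
    (is "n = ?t + ?z")
proof -
  have "\<forall>P\<subseteq>{..<n}. n - ?z \<le> card P \<longrightarrow> auth P"
  proof (intro allI impI)
    fix P assume P: "P \<subseteq> {..<n}" "n - ?z \<le> card P"
    then have "card ({..<n} - P) \<le> ?z"
      using card_Diff_subset[OF finite_subset[OF P(1)] P(1)] by simp
    then have "unauth ({..<n} - P)"
      by (rule unauth_threshold(1)[OF Diff_subset])
    then show "auth P"
      using unauth_Diff[of "{..<n} - P"] double_diff[OF P(1) subset_refl] by simp
  qed
  then have "?t \<le> n - ?z"
    by (rule auth_threshold(2))
  moreover have "?z \<le> n"
    using unauth_threshold(3) card_mono[OF finite_lessThan P0(2)] by simp
  ultimately show ?thesis
    using threshold_le by simp
qed

end

theorem lemma3:
  fixes d n :: nat and dims :: "nat \<Rightarrow> nat"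
    and E :: "(nat \<Rightarrow> nat \<Rightarrow> complex) \<Rightarrow> ((nat \<Rightarrow> nat) \<Rightarrow> (nat \<Rightarrow> nat) \<Rightarrow> complex)"
  assumes "qss_scheme d n dims E"
    and "access_structure d n dims E \<noteq> {}"
  shows "n \<le> t_min d n dims E + z_max d n dims E \<and>
         (pure_qss d n dims E \<longrightarrow> n = t_min d n dims E + z_max d n dims E)"
proof -
  obtain m K where "kraus_complete {..<d} (basis dims {..<n}) m K" and E: "E = kraus_map m K {..<d}"
    using assms(1) unfolding qss_scheme_def is_channel_iff_kraus by blast
  then interpret kraus_encoding d n dims m K
    using assms(1) by unfold_locales (simp_all add: qss_scheme_def)
  obtain P0 where P0: "authorized d n dims E P0"
    using assms(2) unfolding access_structure_def by blast
  then have "P0 \<subseteq> {..<n}"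
    unfolding authorized_def by blast
  note thresholds = threshold_le threshold_eq
  show ?thesis
    unfolding t_min_def z_max_def E
    using thresholds[where auth = "authorized d n dims (kraus_map m K {..<d})"
        and unauth = "unauthorized d n dims (kraus_map m K {..<d})",
        OF P0[unfolded E] \<open>P0 \<subseteq> {..<n}\<close> unauthorized_empty
        not_authorized_and_unauthorized[OF two_le_d] authorized_Diff_unauthorized]
      pure_qss_unauthorized_Diff_authorized[OF _ P0[unfolded E]]
    by blast
qed

end
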